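(* The exponential generating function $T_1(z)=\sum_n T_{1,n}\frac{z^n}{n!}$ of vertex-labeled tree-child networks with exactly one reticulation vertex is \[ T_1(z)=\frac{z^3\left(1-\sqrt{1-2z^2}\,\right)}{(1-2z^2)^{3/2}}=z\frac{\tilde{a}_1(z^2)-\tilde{b}_1(z^2)\sqrt{1-2z^2}}{(1-2z^2)^{3/2}}, \] where $\tilde{a}_1(z)=\tilde{b}_1(z)=z$.
   Context: A phylogenetic network is a connected rooted directed acyclic graph whose vertices are: a root with in-degree 0 and out-degree 2 (unless the network is a single vertex); tree vertices with in-degree 1 and out-degree 2; reticulation vertices with in-degree 2 and out-degree 1; leaves with in-degree 1 and out-degree 0. A tree-child network is a phylogenetic network in which every non-leaf vertex has at least one child that is not a reticulation vertex (in particular no multiple edges). A vertex-labeled network with $n$ vertices has its vertices labeled by distinct labels $1,\dots,n$; $T_{1,n}$ is the number of such tree-child networks with $n$ vertices and one reticulation vertex. *)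

theory Defs
  imports Complex_Main
begin

(* A vertex-labeled network is a simple directed graph: vertex set V, edge relation E \<subseteq> V \<times> V.
   Tree-child networks have no multiple edges, so a relation suffices. *)

definition indeg :: "('a \<times> 'a) set \<Rightarrow> 'a \<Rightarrow> nat" where
  "indeg E v = card {u. (u, v) \<in> E}"

definition outdeg :: "('a \<times> 'a) set \<Rightarrow> 'a \<Rightarrow> nat" where
  "outdeg E v = card {w. (v, w) \<in> E}"

definition is_reticulation :: "('a \<times> 'a) set \<Rightarrow> 'a \<Rightarrow> bool" where
  "is_reticulation E v \<longleftrightarrow> indeg E v = 2 \<and> outdeg E v = 1"

definition phylo_network :: "'a set \<Rightarrow> ('a \<times> 'a) set \<Rightarrow> bool" where
  "phylo_network V E \<longleftrightarrow>
     finite V \<and> E \<subseteq> V \<times> V \<and> acyclic E \<and>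
     (\<exists>r\<in>V. (\<forall>v\<in>V. (r, v) \<in> E\<^sup>*) \<and>
        indeg E r = 0 \<and> (outdeg E r = 2 \<or> V = {r}) \<and>
        (\<forall>v\<in>V - {r}.
            (indeg E v = 1 \<and> outdeg E v = 2) \<or>
            (indeg E v = 2 \<and> outdeg E v = 1) \<or>
            (indeg E v = 1 \<and> outdeg E v = 0)))"

definition tree_child_network :: "'a set \<Rightarrow> ('a \<times> 'a) set \<Rightarrow> bool" where
  "tree_child_network V E \<longleftrightarrow> phylo_network V E \<and>
     (\<forall>v\<in>V. outdeg E v \<noteq> 0 \<longrightarrow> (\<exists>w. (v, w) \<in> E \<and> \<not> is_reticulation E w))"

definition T1 :: "nat \<Rightarrow> nat" where
  "T1 n = card {E. E \<subseteq> {1..n} \<times> {1..n} \<and> tree_child_network {1..n} E \<and>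
                   card {v \<in> {1..n}. is_reticulation E v} = 1}"

definition a1_tilde :: "real \<Rightarrow> real" where "a1_tilde z = z"
definition b1_tilde :: "real \<Rightarrow> real" where "b1_tilde z = z"

end

(*
  Let r be the reticulation of a tree-child network with one reticulation.  Its descendants D
  carry a tree rooted at r in which r has one child and every other vertex has 0 or 2 children
  (a lower tree); the remaining vertices carry a tree in which exactly two vertices, the parents
  of r, have one child and all others 0 or 2 (an upper tree).  Conversely, joining the two unary
  vertices of any upper tree to the root of any lower tree on the complementary vertex set gives
  such a network, so T_{1,n} is a convolution of the numbers of lower and upper trees.  Both are
  counted by the formula (n-2)! d_root / prod_v d_v! for rooted labelled trees with prescribed
  out-degrees.  In exponential generating functions the convolution reads T_1 = z L'(z) U(z),
  and z L'(z) = 1 - sqrt(1 - 2 z^2) and U(z) = z^3 (1 - 2 z^2)^(-3/2) are binomial series.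
*)

theory Submission
  imports Defs "HOL-Analysis.Generalised_Binomial_Theorem"
begin

section \<open>Rooted trees with prescribed out-degrees\<close>

definition rooted_tree :: "'a set \<Rightarrow> ('a \<times> 'a) set \<Rightarrow> 'a \<Rightarrow> bool" where
  "rooted_tree S E \<rho> \<longleftrightarrow> finite S \<and> E \<subseteq> S \<times> S \<and> acyclic E \<and> \<rho> \<in> S \<and>
     (\<forall>v\<in>S. (\<rho>, v) \<in> E\<^sup>*) \<and> (\<forall>v\<in>S - {\<rho>}. indeg E v = 1)"

definition trees_with_outdeg :: "'a set \<Rightarrow> 'a \<Rightarrow> ('a \<Rightarrow> nat) \<Rightarrow> ('a \<times> 'a) set set" where
  "trees_with_outdeg S \<rho> d = {E. rooted_tree S E \<rho> \<and> (\<forall>v\<in>S. outdeg E v = d v)}"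

lemma finite_successors: "finite S \<Longrightarrow> E \<subseteq> S \<times> S \<Longrightarrow> finite {w. (v, w) \<in> E}"
  by (rule finite_subset[of _ S]) auto

lemma finite_predecessors: "finite S \<Longrightarrow> E \<subseteq> S \<times> S \<Longrightarrow> finite {u. (u, v) \<in> E}"
  by (rule finite_subset[of _ S]) auto

lemma outdeg_pos_iff:
  assumes "finite S" "E \<subseteq> S \<times> S"
  shows "0 < outdeg E v \<longleftrightarrow> (\<exists>w. (v, w) \<in> E)"
  using finite_successors[OF assms] by (auto simp: outdeg_def card_gt_0_iff)

lemma card_eq_sum_outdeg:
  assumes "finite S" "E \<subseteq> S \<times> S"
  shows "card E = (\<Sum>v\<in>S. outdeg E v)"
proof -
  have "E = Sigma S (\<lambda>v. {w. (v, w) \<in> E})" using assms(2) by auto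
  also have "card \<dots> = (\<Sum>v\<in>S. card {w. (v, w) \<in> E})"
    using assms by (intro card_SigmaI) (auto simp: finite_successors)
  finally show ?thesis by (simp add: outdeg_def)
qed

lemma card_eq_sum_indeg:
  assumes "finite S" "E \<subseteq> S \<times> S"
  shows "card E = (\<Sum>v\<in>S. indeg E v)"
proof -
  have "outdeg (E\<inverse>) v = indeg E v" for v by (simp add: outdeg_def indeg_def)
  then show ?thesis using card_eq_sum_outdeg[of S "E\<inverse>"] assms by auto
qed

lemma rooted_tree_subset: "rooted_tree S E \<rho> \<Longrightarrow> E \<subseteq> S \<times> S"
  unfolding rooted_tree_def by blast

lemma rooted_tree_root_indeg:
  assumes "rooted_tree S E \<rho>" shows "indeg E \<rho> = 0"
proof -
  have "(u, \<rho>) \<notin> E" for u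
  proof
    assume u: "(u, \<rho>) \<in> E"
    then have "(\<rho>, u) \<in> E\<^sup>*" using assms unfolding rooted_tree_def by auto
    with u have "(u, u) \<in> E\<^sup>+" by (meson rtrancl_into_trancl2)
    then show False using assms unfolding rooted_tree_def acyclic_def by auto
  qed
  then show ?thesis by (simp add: indeg_def)
qed

lemma rooted_tree_root_unique:
  assumes "rooted_tree S E \<rho>" "rooted_tree S E \<rho>'" shows "\<rho> = \<rho>'"
  using rooted_tree_root_indeg[OF assms(2)] assms unfolding rooted_tree_def by force

lemma rooted_tree_sum_outdeg:
  assumes T: "rooted_tree S E \<rho>" shows "(\<Sum>v\<in>S. outdeg E v) = card S - 1"
proof -
  have fin: "finite S" and sub: "E \<subseteq> S \<times> S" and \<rho>: "\<rho> \<in> S"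
    using T unfolding rooted_tree_def by auto
  have "(\<Sum>v\<in>S. outdeg E v) = (\<Sum>v\<in>S. indeg E v)"
    using card_eq_sum_outdeg[OF fin sub] card_eq_sum_indeg[OF fin sub] by simp
  also have "\<dots> = indeg E \<rho> + (\<Sum>v\<in>S - {\<rho>}. indeg E v)"
    using fin \<rho> by (simp add: sum.remove)
  also have "\<dots> = card S - 1"
    using T rooted_tree_root_indeg[OF T] fin \<rho> unfolding rooted_tree_def by simp
  finally show ?thesis .
qed

lemma rooted_tree_root_outdeg_pos:
  assumes T: "rooted_tree S E \<rho>" and "v \<in> S" "v \<noteq> \<rho>"
  shows "0 < outdeg E \<rho>"
proof -
  have "(\<rho>, v) \<in> E\<^sup>*" using assms unfolding rooted_tree_def by blast
  then have "(\<rho>, v) \<in> E\<^sup>+" using assms(3) by (simp add: rtrancl_eq_or_trancl)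
  then obtain w where "(\<rho>, w) \<in> E" by (meson tranclD)
  moreover have "finite S" "E \<subseteq> S \<times> S" using T unfolding rooted_tree_def by auto
  ultimately show ?thesis by (metis outdeg_pos_iff)
qed

lemma rooted_tree_singleton_iff: "rooted_tree {\<rho>} E \<rho> \<longleftrightarrow> E = {}"
proof
  assume T: "rooted_tree {\<rho>} E \<rho>"
  then have "E \<subseteq> {(\<rho>, \<rho>)}" "(\<rho>, \<rho>) \<notin> E" unfolding rooted_tree_def acyclic_def by auto
  then show "E = {}" by auto
qed (auto simp: rooted_tree_def indeg_def acyclic_def)

lemma finite_trees_with_outdeg: "finite S \<Longrightarrow> finite (trees_with_outdeg S \<rho> d)"
  by (rule finite_subset[of _ "Pow (S \<times> S)"]) (auto simp: trees_with_outdeg_def rooted_tree_def)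

lemma rooted_tree_remove_leaf:
  assumes T: "rooted_tree S E \<rho>" and lf: "lf \<in> S" "lf \<noteq> \<rho>" "outdeg E lf = 0"
  obtains j where "(j, lf) \<in> E" "j \<in> S - {lf}" "rooted_tree (S - {lf}) (E - {(j, lf)}) \<rho>"
    "\<And>v. outdeg (E - {(j, lf)}) v = (if v = j then outdeg E v - 1 else outdeg E v)"
proof -
  have fin: "finite S" and sub: "E \<subseteq> S \<times> S" and ac: "acyclic E" and \<rho>: "\<rho> \<in> S"
    and reach: "\<forall>v\<in>S. (\<rho>, v) \<in> E\<^sup>*" and ind: "\<forall>v\<in>S - {\<rho>}. indeg E v = 1"
    using T unfolding rooted_tree_def by auto
  have "card {u. (u, lf) \<in> E} = 1" using ind lf unfolding indeg_def by auto
  then obtain j where pj: "{u. (u, lf) \<in> E} = {j}" by (meson card_1_singletonE)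
  have no_succ: "(lf, w) \<notin> E" for w using outdeg_pos_iff[OF fin sub, of lf] lf(3) by auto
  have jl: "(j, lf) \<in> E" using pj by auto
  define E' where "E' = E - {(j, lf)}"
  have sub': "E' \<subseteq> (S - {lf}) \<times> (S - {lf})"
    using sub pj no_succ unfolding E'_def by auto
  have reach': "(\<rho>, v) \<in> E'\<^sup>*" if "(\<rho>, v) \<in> E\<^sup>*" "v \<noteq> lf" for v
    using that
  proof (induction rule: rtrancl_induct)
    case (step w v)
    then show ?case unfolding E'_def using no_succ by (auto intro: rtrancl_into_rtrancl)
  qed simp
  have "rooted_tree (S - {lf}) E' \<rho>"
    unfolding rooted_tree_def
  proof (intro conjI ballI)
    show "acyclic E'" using ac unfolding E'_def by (rule acyclic_subset) auto
    show "(\<rho>, v) \<in> E'\<^sup>*" if "v \<in> S - {lf}" for v using that reach reach' by auto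
    show "indeg E' v = 1" if "v \<in> S - {lf} - {\<rho>}" for v
    proof -
      have "{u. (u, v) \<in> E'} = {u. (u, v) \<in> E}" using that unfolding E'_def by auto
      then show ?thesis using ind that unfolding indeg_def by auto
    qed
  qed (use fin sub' \<rho> lf in auto)
  moreover have "outdeg E' v = (if v = j then outdeg E v - 1 else outdeg E v)" for v
  proof -
    have "{w. (v, w) \<in> E'} = {w. (v, w) \<in> E} - (if v = j then {lf} else {})"
      unfolding E'_def by auto
    then show ?thesis unfolding outdeg_def using jl finite_successors[OF fin sub, of v]
      by (auto simp: card_Diff_singleton)
  qed
  moreover have "j \<in> S - {lf}" using jl sub no_succ by auto
  ultimately show ?thesis using that jl unfolding E'_def by blast
qed

lemma rooted_tree_add_leaf:
  assumes T: "rooted_tree S E \<rho>" and lf: "lf \<notin> S" and j: "j \<in> S"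
  shows "rooted_tree (insert lf S) (insert (j, lf) E) \<rho>"
    and "outdeg (insert (j, lf) E) v = (if v = j then Suc (outdeg E v) else outdeg E v)"
proof -
  have fin: "finite S" and sub: "E \<subseteq> S \<times> S" and ac: "acyclic E" and \<rho>: "\<rho> \<in> S"
    and reach: "\<forall>v\<in>S. (\<rho>, v) \<in> E\<^sup>*" and ind: "\<forall>v\<in>S - {\<rho>}. indeg E v = 1"
    using T unfolding rooted_tree_def by auto
  let ?E = "insert (j, lf) E"
  have new: "(lf, x) \<notin> E" "(x, lf) \<notin> E" for x using sub lf by auto
  have "(lf, j) \<notin> E\<^sup>*" using new lf j by (metis converse_rtranclE)
  then have "acyclic ?E" using ac by (simp add: acyclic_insert)
  moreover have "(\<rho>, v) \<in> ?E\<^sup>*" if "v \<in> insert lf S" for v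
  proof -
    have "E\<^sup>* \<subseteq> ?E\<^sup>*" by (rule rtrancl_mono) auto
    then show ?thesis using that reach j by (auto intro: rtrancl_into_rtrancl)
  qed
  moreover have "indeg ?E v = 1" if "v \<in> insert lf S - {\<rho>}" for v
  proof (cases "v = lf")
    case True
    then have "{u. (u, v) \<in> ?E} = {j}" using new by auto
    then show ?thesis unfolding indeg_def by simp
  next
    case False
    then have "{u. (u, v) \<in> ?E} = {u. (u, v) \<in> E}" by auto
    then show ?thesis using ind that False unfolding indeg_def by auto
  qed
  ultimately show "rooted_tree (insert lf S) ?E \<rho>"
    using fin sub j \<rho> unfolding rooted_tree_def by (intro conjI) auto
  have "{w. (v, w) \<in> ?E} = (if v = j then insert lf {w. (v, w) \<in> E} else {w. (v, w) \<in> E})"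
    by auto
  moreover have "lf \<notin> {w. (v, w) \<in> E}" using new by auto
  ultimately show "outdeg ?E v = (if v = j then Suc (outdeg E v) else outdeg E v)"
    unfolding outdeg_def using finite_successors[OF fin sub, of v] by auto
qed

lemma trees_with_outdeg_remove_leaf:
  assumes fin: "finite S" and lf: "lf \<in> S" "lf \<noteq> \<rho>" "d lf = 0"
  shows "trees_with_outdeg S \<rho> d =
    (\<Union>j\<in>{j \<in> S - {lf}. 0 < d j}. insert (j, lf) ` trees_with_outdeg (S - {lf}) \<rho> (d(j := d j - 1)))"
    (is "_ = (\<Union>j\<in>?J. ?A j)")
proof (intro equalityI subsetI)
  fix E assume "E \<in> trees_with_outdeg S \<rho> d"
  then have T: "rooted_tree S E \<rho>" and od: "\<forall>v\<in>S. outdeg E v = d v"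
    unfolding trees_with_outdeg_def by auto
  obtain j where j: "(j, lf) \<in> E" "j \<in> S - {lf}" "rooted_tree (S - {lf}) (E - {(j, lf)}) \<rho>"
      "\<And>v. outdeg (E - {(j, lf)}) v = (if v = j then outdeg E v - 1 else outdeg E v)"
    using rooted_tree_remove_leaf[OF T lf(1,2)] od lf by auto
  have "0 < outdeg E j" using outdeg_pos_iff[OF fin rooted_tree_subset[OF T], of j] j(1) by blast
  then have "j \<in> ?J" using j(2) od by auto
  moreover have "E \<in> ?A j"
  proof (rule image_eqI)
    show "E = insert (j, lf) (E - {(j, lf)})" using j(1) by auto
    show "E - {(j, lf)} \<in> trees_with_outdeg (S - {lf}) \<rho> (d(j := d j - 1))"
      using j(3,4) od unfolding trees_with_outdeg_def by auto
  qed
  ultimately show "E \<in> (\<Union>j\<in>?J. ?A j)" by (rule UN_I)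
next
  fix E assume "E \<in> (\<Union>j\<in>?J. ?A j)"
  then obtain j E' where j: "j \<in> S - {lf}" "0 < d j" and E: "E = insert (j, lf) E'"
    and T': "rooted_tree (S - {lf}) E' \<rho>" and od': "\<forall>v\<in>S - {lf}. outdeg E' v = (d(j := d j - 1)) v"
    unfolding trees_with_outdeg_def by auto
  have S: "S = insert lf (S - {lf})" using lf by auto
  have "outdeg E' lf = 0"
    using outdeg_pos_iff[OF _ rooted_tree_subset[OF T'], of lf] fin rooted_tree_subset[OF T'] by auto
  then have "outdeg E v = d v" if "v \<in> S" for v
    using rooted_tree_add_leaf(2)[OF T' _ j(1), of lf v] od' that j lf unfolding E
    by (cases "v = lf") auto
  moreover have "rooted_tree S E \<rho>"
    using rooted_tree_add_leaf(1)[OF T' _ j(1), of lf] S unfolding E by simp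
  ultimately show "E \<in> trees_with_outdeg S \<rho> d" unfolding trees_with_outdeg_def by auto
qed

lemma card_trees_with_outdeg_remove_leaf:
  assumes "finite S" "lf \<in> S" "lf \<noteq> \<rho>" "d lf = 0"
  shows "card (trees_with_outdeg S \<rho> d) =
    (\<Sum>j\<in>{j \<in> S - {lf}. 0 < d j}. card (trees_with_outdeg (S - {lf}) \<rho> (d(j := d j - 1))))"
proof -
  let ?T = "trees_with_outdeg (S - {lf}) \<rho>"
  have new: "(j, lf) \<notin> E" if "E \<in> ?T e" for E e j
    using that unfolding trees_with_outdeg_def by (auto dest: rooted_tree_subset)
  have "inj_on (insert (j, lf)) (?T e)" for j e
  proof (rule inj_onI)
    fix E1 E2 assume "E1 \<in> ?T e" "E2 \<in> ?T e" "insert (j, lf) E1 = insert (j, lf) E2"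
    then show "E1 = E2" using insert_ident[OF new new] by blast
  qed
  then have card_img: "card (insert (j, lf) ` ?T e) = card (?T e)" for j e
    by (rule card_image)
  have "insert (i, lf) ` ?T e \<inter> insert (j, lf) ` ?T e' = {}" if "i \<noteq> j" for i j e e'
    using that new by blast
  then have "card (\<Union>j\<in>{j \<in> S - {lf}. 0 < d j}. insert (j, lf) ` ?T (d(j := d j - 1))) =
      (\<Sum>j\<in>{j \<in> S - {lf}. 0 < d j}. card (insert (j, lf) ` ?T (d(j := d j - 1))))"
    using assms(1) by (intro card_UN_disjoint) (auto simp: finite_trees_with_outdeg)
  then show ?thesis by (simp only: trees_with_outdeg_remove_leaf[of S lf \<rho> d, OF assms] card_img)
qed

lemma exists_zero_if_sum_less_card:
  fixes d :: "'a \<Rightarrow> nat"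
  assumes "finite S" "(\<Sum>v\<in>S. d v) < card S"
  shows "\<exists>v\<in>S. d v = 0"
proof (rule ccontr)
  assume "\<not> (\<exists>v\<in>S. d v = 0)"
  then have "(\<Sum>v\<in>S. 1) \<le> (\<Sum>v\<in>S. d v)" by (intro sum_mono) (auto simp: Suc_le_eq)
  then show False using assms by simp
qed

lemma sum_fun_upd_decrement_fact:
  fixes d :: "'a \<Rightarrow> nat"
  assumes "finite S" "\<rho> \<in> S" "card S = Suc n" "(\<Sum>v\<in>S. d v) = Suc n" "0 < d \<rho>"
  shows "(\<Sum>j\<in>S. d j * (if n = 0 then 1 else fact (n - 1) * (d(j := d j - 1)) \<rho>)) = fact n * d \<rho>"
proof (cases "n = 0")
  case True
  then have "S = {\<rho>}" using assms(2,3) by (auto simp: card_Suc_eq)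
  then show ?thesis using True assms(4) by simp
next
  case False
  have "(\<Sum>j\<in>S - {\<rho>}. d j * (d(j := d j - 1)) \<rho>) = (\<Sum>j\<in>S - {\<rho>}. d j * d \<rho>)"
    by (intro sum.cong) auto
  then have "(\<Sum>j\<in>S. d j * (d(j := d j - 1)) \<rho>) = d \<rho> * (d \<rho> - 1) + (\<Sum>j\<in>S - {\<rho>}. d j * d \<rho>)"
    using assms(1,2) by (simp add: sum.remove)
  moreover have "(\<Sum>j\<in>S. d j) * d \<rho> = d \<rho> * d \<rho> + (\<Sum>j\<in>S - {\<rho>}. d j * d \<rho>)"
    using assms(1,2) by (simp add: sum.remove sum_distrib_right distrib_right)
  moreover have "d \<rho> * (d \<rho> - 1) + d \<rho> = d \<rho> * d \<rho>"
    using assms(5) by (cases "d \<rho>") auto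
  ultimately have "(\<Sum>j\<in>S. d j * (d(j := d j - 1)) \<rho>) + d \<rho> = (\<Sum>j\<in>S. d j) * d \<rho>"
    by linarith
  then have sum_eq: "(\<Sum>j\<in>S. d j * (d(j := d j - 1)) \<rho>) = n * d \<rho>" using assms(4) by simp
  have "(\<Sum>j\<in>S. d j * (if n = 0 then 1 else fact (n - 1) * (d(j := d j - 1)) \<rho>)) =
      (\<Sum>j\<in>S. fact (n - 1) * (d j * (d(j := d j - 1)) \<rho>))"
    using False by (simp add: mult.left_commute)
  also have "\<dots> = fact (n - 1) * (n * d \<rho>)"
    by (simp only: sum_distrib_left[symmetric] sum_eq)
  also have "\<dots> = fact n * d \<rho>"
    using False by (simp add: fact_reduce[of n])
  finally show ?thesis .
qed

lemma prod_fact_fun_upd_decrement: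
  fixes d :: "'a \<Rightarrow> nat"
  assumes "finite S" "j \<in> S" "0 < d j"
  shows "(\<Prod>v\<in>S. fact (d v) :: nat) = d j * (\<Prod>v\<in>S. fact ((d(j := d j - 1)) v))"
proof -
  have "fact (d j) = d j * (fact (d j - 1) :: nat)" using assms(3) by (simp add: fact_reduce)
  then show ?thesis using assms(1,2) by (simp add: prod.remove)
qed

lemma trees_with_outdeg_empty_if_sum:
  assumes "(\<Sum>v\<in>S. d v) \<noteq> card S - 1"
  shows "trees_with_outdeg S \<rho> d = {}"
proof (rule equals0I)
  fix E assume "E \<in> trees_with_outdeg S \<rho> d"
  then have "rooted_tree S E \<rho>" "(\<Sum>v\<in>S. outdeg E v) = (\<Sum>v\<in>S. d v)"
    unfolding trees_with_outdeg_def by (auto intro: sum.cong)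
  then show False using rooted_tree_sum_outdeg[of S E \<rho>] assms by simp
qed

lemma trees_with_outdeg_empty_if_root:
  assumes "v \<in> S" "v \<noteq> \<rho>" "d \<rho> = 0"
  shows "trees_with_outdeg S \<rho> d = {}"
proof (rule equals0I)
  fix E assume "E \<in> trees_with_outdeg S \<rho> d"
  then have "rooted_tree S E \<rho>" "outdeg E \<rho> = d \<rho>"
    unfolding trees_with_outdeg_def rooted_tree_def by auto
  then show False using rooted_tree_root_outdeg_pos assms by fastforce
qed

text \<open>The classical count (n - 2)! d(root) / prod_v d(v)!, multiplied out so that it also covers
  a single vertex; the induction removes a leaf and sums over its possible parents.\<close>

lemma card_trees_with_outdeg_mult_prod_fact:
  assumes "finite S" "\<rho> \<in> S" "card S = Suc n"
  shows "card (trees_with_outdeg S \<rho> d) * (\<Prod>v\<in>S. fact (d v)) =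
     (if (\<Sum>v\<in>S. d v) = n then (if n = 0 then 1 else fact (n - 1) * d \<rho>) else 0)"
  using assms
proof (induction n arbitrary: S d)
  case 0
  then obtain x where "S = {x}" by (auto simp: card_Suc_eq)
  then have S: "S = {\<rho>}" using 0 by simp
  have "trees_with_outdeg S \<rho> d = (if d \<rho> = 0 then {{}} else {})"
    unfolding S trees_with_outdeg_def rooted_tree_singleton_iff by (auto simp: outdeg_def)
  then show ?case using S by simp
next
  case (Suc n)
  note fin = Suc.prems(1) and \<rho> = Suc.prems(2) and card_S = Suc.prems(3)
  have "S \<noteq> {\<rho>}" using card_S by auto
  then obtain v where v: "v \<in> S" "v \<noteq> \<rho>" using \<rho> by blast
  consider "(\<Sum>v\<in>S. d v) \<noteq> Suc n" | "d \<rho> = 0" | "(\<Sum>v\<in>S. d v) = Suc n" "0 < d \<rho>"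
    by blast
  then show ?case
  proof cases
    case 1
    then show ?thesis using trees_with_outdeg_empty_if_sum[where S = S and d = d] card_S by simp
  next
    case 2
    then show ?thesis using trees_with_outdeg_empty_if_root[OF v, of d] by simp
  next
    case 3
    have "\<exists>lf\<in>S. d lf = 0" using exists_zero_if_sum_less_card[OF fin] 3 card_S by simp
    then obtain lf where lf: "lf \<in> S" "d lf = 0" by blast
    have lf_\<rho>: "lf \<noteq> \<rho>" using lf 3 by auto
    define S' where "S' = S - {lf}"
    define J where "J = {j \<in> S'. 0 < d j}"
    define dj where "dj j = d(j := d j - 1)" for j
    have fin': "finite S'" and \<rho>': "\<rho> \<in> S'" and card_S': "card S' = Suc n"
      using fin \<rho> lf_\<rho> lf card_S unfolding S'_def by auto
    have sum_S': "(\<Sum>v\<in>S'. d v) = Suc n" and prod_S': "(\<Prod>v\<in>S'. fact (d v) :: nat) = (\<Prod>v\<in>S. fact (d v))"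
      using 3 fin lf unfolding S'_def by (simp_all add: sum.remove prod.remove)
    have summand: "card (trees_with_outdeg S' \<rho> (dj j)) * (\<Prod>v\<in>S. fact (d v)) =
        d j * (if n = 0 then 1 else fact (n - 1) * dj j \<rho>)" if "j \<in> J" for j
    proof -
      have j: "j \<in> S'" "0 < d j" using that unfolding J_def by auto
      have "(\<Prod>v\<in>S. fact (d v)) = d j * (\<Prod>v\<in>S'. fact (dj j v))"
        using prod_fact_fun_upd_decrement[of S' j d, OF fin' j] unfolding prod_S' dj_def .
      moreover have "(\<Sum>v\<in>S'. dj j v) = n"
        using fin' j sum_S' by (simp add: sum.remove dj_def)
      ultimately show ?thesis using Suc.IH[OF fin' \<rho>' card_S', of "dj j"] by simp
    qed
    have "card (trees_with_outdeg S \<rho> d) * (\<Prod>v\<in>S. fact (d v)) =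
        (\<Sum>j\<in>J. d j * (if n = 0 then 1 else fact (n - 1) * dj j \<rho>))"
      using card_trees_with_outdeg_remove_leaf[of S lf \<rho> d, OF fin lf(1) lf_\<rho> lf(2)] summand
      unfolding S'_def J_def dj_def by (simp add: sum_distrib_right)
    also have "\<dots> = (\<Sum>j\<in>S'. d j * (if n = 0 then 1 else fact (n - 1) * dj j \<rho>))"
      using fin' unfolding J_def by (intro sum.mono_neutral_left) auto
    also have "\<dots> = fact n * d \<rho>"
      using sum_fun_upd_decrement_fact[OF fin' \<rho>' card_S' sum_S'] 3 unfolding dj_def by simp
    finally show ?thesis using 3 by simp
  qed
qed

theorem card_trees_with_outdeg:
  assumes "finite S" "\<rho> \<in> S" "2 \<le> card S" "(\<Sum>v\<in>S. d v) = card S - 1"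
  shows "real (card (trees_with_outdeg S \<rho> d)) = fact (card S - 2) * d \<rho> / (\<Prod>v\<in>S. fact (d v))"
proof -
  obtain n where n: "card S = Suc (Suc n)" using assms(3) by (metis add_2_eq_Suc le_Suc_ex)
  have "real (card (trees_with_outdeg S \<rho> d)) * (\<Prod>v\<in>S. fact (d v)) = fact (card S - 2) * d \<rho>"
    using arg_cong[OF card_trees_with_outdeg_mult_prod_fact[OF assms(1,2) n, of d], of real] assms(4) n
    by (simp add: of_nat_prod)
  moreover have "(\<Prod>v\<in>S. fact (d v) :: real) \<noteq> 0" by (simp add: prod_zero_iff assms(1))
  ultimately show ?thesis by (simp add: field_simps)
qed

lemma trees_with_outdeg_disjoint:
  assumes "E \<in> trees_with_outdeg S \<rho> d" "E \<in> trees_with_outdeg S \<rho>' d'"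
  shows "\<rho> = \<rho>'" "\<forall>v\<in>S. d v = d' v"
  using assms rooted_tree_root_unique unfolding trees_with_outdeg_def by auto

section \<open>Lower and upper trees\<close>

definition outdeg_pattern :: "'a set \<Rightarrow> 'a set \<Rightarrow> 'a \<Rightarrow> nat" where
  "outdeg_pattern P B v = (if v \<in> P then 1 else if v \<in> B then 2 else 0)"

lemma outdeg_pattern_eqD:
  assumes "P \<union> B \<subseteq> S" "P' \<union> B' \<subseteq> S" "P \<inter> B = {}" "P' \<inter> B' = {}"
    and "\<forall>v\<in>S. outdeg_pattern P B v = outdeg_pattern P' B' v"
  shows "P = P'" "B = B'"
  using assms unfolding outdeg_pattern_def by (auto split: if_splits)

lemma sum_outdeg_pattern:
  assumes "finite S" "P \<subseteq> S" "B \<subseteq> S" "P \<inter> B = {}"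
  shows "(\<Sum>v\<in>S. outdeg_pattern P B v) = card P + 2 * card B"
proof -
  have "(\<Sum>v\<in>S. outdeg_pattern P B v) = (\<Sum>v\<in>S. (if v \<in> P then 1 else 0) + (if v \<in> B then 2 else 0))"
    using assms(4) by (intro sum.cong) (auto simp: outdeg_pattern_def)
  also have "\<dots> = card (S \<inter> P) + 2 * card (S \<inter> B)"
    using assms(1) by (simp add: sum.distrib sum.If_cases)
  finally show ?thesis using assms(2,3) by (simp add: Int_absorb1)
qed

lemma prod_fact_outdeg_pattern:
  assumes "finite S" "B \<subseteq> S" "P \<inter> B = {}"
  shows "(\<Prod>v\<in>S. fact (outdeg_pattern P B v) :: real) = 2 ^ card B"
proof -
  have "(\<Prod>v\<in>S. fact (outdeg_pattern P B v) :: real) = (\<Prod>v\<in>S. if v \<in> B then 2 else 1)"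
    using assms(3) by (intro prod.cong) (auto simp: outdeg_pattern_def)
  also have "\<dots> = 2 ^ card (S \<inter> B)"
    using assms(1) by (simp add: prod.If_cases)
  finally show ?thesis using assms(2) by (simp add: Int_absorb1)
qed

lemma card_trees_with_outdeg_pattern:
  assumes "finite S" "\<rho> \<in> S" "P \<subseteq> S" "B \<subseteq> S" "P \<inter> B = {}" "P \<noteq> {}"
  shows "real (card (trees_with_outdeg S \<rho> (outdeg_pattern P B))) =
    (if card P + 2 * card B + 1 = card S
     then fact (card S - 2) * outdeg_pattern P B \<rho> / 2 ^ card B else 0)"
proof (cases "card P + 2 * card B + 1 = card S")
  case True
  have "0 < card P" using assms(1,3,6) by (simp add: card_gt_0_iff finite_subset)
  then show ?thesis
    using True card_trees_with_outdeg[OF assms(1,2)] sum_outdeg_pattern[OF assms(1,3,4,5)]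
      prod_fact_outdeg_pattern[OF assms(1,4,5)] by simp
next
  case False
  have "0 < card S" using assms(1,2) by (auto simp: card_gt_0_iff)
  then show ?thesis
    using False trees_with_outdeg_empty_if_sum[where S = S and d = "outdeg_pattern P B"]
      sum_outdeg_pattern[OF assms(1,3,4,5)] by simp
qed

definition lower_trees :: "'a set \<Rightarrow> 'a \<Rightarrow> ('a \<times> 'a) set set" where
  "lower_trees D r = {E. rooted_tree D E r \<and> outdeg E r = 1 \<and>
     (\<forall>v\<in>D - {r}. outdeg E v = 0 \<or> outdeg E v = 2)}"

definition upper_trees :: "'a set \<Rightarrow> ('a \<times> 'a) set set" where
  "upper_trees U = {E. (\<exists>\<rho>. rooted_tree U E \<rho>) \<and> (\<forall>v\<in>U. outdeg E v \<le> 2) \<and>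
     card {v \<in> U. outdeg E v = 1} = 2}"

definition upper_patterns :: "'a set \<Rightarrow> ('a set \<times> 'a set) set" where
  "upper_patterns U = (SIGMA P:{P. P \<subseteq> U \<and> card P = 2}. Pow (U - P))"

lemma lower_trees_eq_UN:
  "lower_trees D r = (\<Union>B\<in>Pow (D - {r}). trees_with_outdeg D r (outdeg_pattern {r} B))"
proof (intro equalityI subsetI)
  fix E assume E: "E \<in> lower_trees D r"
  let ?B = "{v \<in> D - {r}. outdeg E v = 2}"
  have "E \<in> trees_with_outdeg D r (outdeg_pattern {r} ?B)"
    using E unfolding lower_trees_def trees_with_outdeg_def outdeg_pattern_def by auto
  then show "E \<in> (\<Union>B\<in>Pow (D - {r}). trees_with_outdeg D r (outdeg_pattern {r} B))"
    by (rule UN_I[rotated]) auto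
next
  fix E assume "E \<in> (\<Union>B\<in>Pow (D - {r}). trees_with_outdeg D r (outdeg_pattern {r} B))"
  then obtain B where "B \<subseteq> D - {r}" "rooted_tree D E r" "\<forall>v\<in>D. outdeg E v = outdeg_pattern {r} B v"
    unfolding trees_with_outdeg_def by auto
  moreover have "r \<in> D" using \<open>rooted_tree D E r\<close> unfolding rooted_tree_def by simp
  ultimately show "E \<in> lower_trees D r"
    unfolding lower_trees_def outdeg_pattern_def by auto
qed

lemma upper_trees_eq_UN:
  "upper_trees U =
    (\<Union>(\<rho>, P, B)\<in>U \<times> upper_patterns U. trees_with_outdeg U \<rho> (outdeg_pattern P B))"
proof (intro equalityI subsetI)
  fix E assume E: "E \<in> upper_trees U"
  then obtain \<rho> where T: "rooted_tree U E \<rho>" unfolding upper_trees_def by auto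
  let ?P = "{v \<in> U. outdeg E v = 1}" and ?B = "{v \<in> U. outdeg E v = 2}"
  show "E \<in> (\<Union>(\<rho>, P, B)\<in>U \<times> upper_patterns U. trees_with_outdeg U \<rho> (outdeg_pattern P B))"
  proof (rule UN_I)
    show "(\<rho>, ?P, ?B) \<in> U \<times> upper_patterns U"
      using E T unfolding upper_trees_def upper_patterns_def rooted_tree_def by auto
    have "E \<in> trees_with_outdeg U \<rho> (outdeg_pattern ?P ?B)"
      using E T unfolding upper_trees_def trees_with_outdeg_def outdeg_pattern_def
      by (auto simp: le_Suc_eq numeral_2_eq_2)
    then show "E \<in> (case (\<rho>, ?P, ?B) of (\<rho>, P, B) \<Rightarrow> trees_with_outdeg U \<rho> (outdeg_pattern P B))"
      by simp
  qed
next
  fix E assume "E \<in> (\<Union>(\<rho>, P, B)\<in>U \<times> upper_patterns U. trees_with_outdeg U \<rho> (outdeg_pattern P B))"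
  then obtain \<rho> P B where PB: "P \<subseteq> U" "card P = 2" "B \<subseteq> U - P"
    and T: "rooted_tree U E \<rho>" and od: "\<forall>v\<in>U. outdeg E v = outdeg_pattern P B v"
    unfolding upper_patterns_def trees_with_outdeg_def by auto
  have "{v \<in> U. outdeg E v = 1} = P"
    using PB od unfolding outdeg_pattern_def by (auto split: if_splits)
  then show "E \<in> upper_trees U"
    using PB T od unfolding upper_trees_def outdeg_pattern_def by auto
qed

lemma finite_upper_patterns: "finite U \<Longrightarrow> finite (upper_patterns U)"
  unfolding upper_patterns_def by (auto intro: finite_SigmaI)

lemma sum_Pow_card:
  fixes h :: "nat \<Rightarrow> 'b::comm_semiring_1"
  assumes "finite A"
  shows "(\<Sum>B\<in>Pow A. h (card B)) = (\<Sum>k\<le>card A. of_nat (card A choose k) * h k)"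
proof -
  have "(\<Sum>B\<in>Pow A. h (card B)) = (\<Sum>k\<le>card A. \<Sum>B\<in>{B \<in> Pow A. card B = k}. h (card B))"
    using assms by (intro sum.group[symmetric]) (auto intro: card_mono)
  also have "\<dots> = (\<Sum>k\<le>card A. of_nat (card A choose k) * h k)"
  proof (rule sum.cong[OF refl])
    fix k
    have "{B \<in> Pow A. card B = k} = {B. B \<subseteq> A \<and> card B = k}" by auto
    then show "(\<Sum>B\<in>{B \<in> Pow A. card B = k}. h (card B)) = of_nat (card A choose k) * h k"
      using n_subsets[OF assms, of k] by simp
  qed
  finally show ?thesis .
qed

lemma sum_choose_if_double_plus:
  fixes f :: "nat \<Rightarrow> real"
  shows "(\<Sum>k\<le>N. real (N choose k) * (if 2 * k + c = m then f k else 0)) =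
    (if c \<le> m \<and> even (m - c) then real (N choose ((m - c) div 2)) * f ((m - c) div 2) else 0)"
proof (cases "c \<le> m \<and> even (m - c)")
  case True
  let ?k = "(m - c) div 2"
  have "(\<Sum>k\<le>N. real (N choose k) * (if 2 * k + c = m then f k else 0)) =
      (\<Sum>k\<le>N. if k = ?k then real (N choose k) * f k else 0)"
    using True by (intro sum.cong) auto
  also have "\<dots> = real (N choose ?k) * f ?k"
    by (simp add: sum.delta binomial_eq_0)
  finally show ?thesis by (simp only: if_P[OF True])
next
  case False
  then have "2 * k + c \<noteq> m" for k by presburger
  then have "(\<Sum>k\<le>N. real (N choose k) * (if 2 * k + c = m then f k else 0)) = 0" by simp
  then show ?thesis by (simp only: if_not_P[OF False])
qed

lemma sum_roots_card_trees_with_outdeg_pattern: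
  assumes "finite S" "P \<subseteq> S" "B \<subseteq> S" "P \<inter> B = {}" "P \<noteq> {}"
  shows "(\<Sum>\<rho>\<in>S. real (card (trees_with_outdeg S \<rho> (outdeg_pattern P B)))) =
    (if card P + 2 * card B + 1 = card S then fact (card S - 1) / 2 ^ card B else 0)"
proof (cases "card P + 2 * card B + 1 = card S")
  case True
  have "(\<Sum>\<rho>\<in>S. real (card (trees_with_outdeg S \<rho> (outdeg_pattern P B)))) =
      (\<Sum>\<rho>\<in>S. fact (card S - 2) * outdeg_pattern P B \<rho> / 2 ^ card B)"
    using card_trees_with_outdeg_pattern[OF assms(1) _ assms(2-5)] True by (intro sum.cong) auto
  also have "\<dots> = fact (card S - 2) * real (card S - 1) / 2 ^ card B"
    using sum_outdeg_pattern[OF assms(1-4)] True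
    by (simp add: sum_divide_distrib[symmetric] sum_distrib_left[symmetric] flip: of_nat_sum)
  also have "fact (card S - 2) * real (card S - 1) = fact (card S - 1)"
  proof -
    have "0 < card P" using assms(1,2,5) by (simp add: card_gt_0_iff finite_subset)
    then have "card S - 1 = Suc (card S - 2)" using True by simp
    then show ?thesis by (metis fact_Suc mult.commute)
  qed
  finally show ?thesis using True by simp
next
  case False
  then show ?thesis
    using card_trees_with_outdeg_pattern[OF assms(1) _ assms(2-5)] by simp
qed

text \<open>A lower tree on m = 2k + 2 vertices has k binary vertices among the m - 1 non-root ones;
  an upper tree on u = 2k + 3 vertices has two unary vertices and k binary ones.\<close>

definition lower_tree_number :: "nat \<Rightarrow> real" where
  "lower_tree_number m = (if 2 \<le> m \<and> even m
     then real ((m - 1) choose ((m - 2) div 2)) * fact (m - 2) / 2 ^ ((m - 2) div 2) else 0)"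

definition upper_tree_number :: "nat \<Rightarrow> real" where
  "upper_tree_number u = (if 3 \<le> u \<and> odd u
     then real (u choose 2) * real ((u - 2) choose ((u - 3) div 2)) * fact (u - 1) / 2 ^ ((u - 3) div 2)
     else 0)"

lemma lower_tree_number_0: "lower_tree_number 0 = 0"
  by (simp add: lower_tree_number_def)

lemma lower_tree_number_nonneg: "0 \<le> lower_tree_number m"
  unfolding lower_tree_number_def by simp

lemma upper_tree_number_nonneg: "0 \<le> upper_tree_number m"
  unfolding upper_tree_number_def by simp

lemma card_lower_trees_eq_sum:
  assumes "finite D" "r \<in> D"
  shows "card (lower_trees D r) =
    (\<Sum>B\<in>Pow (D - {r}). card (trees_with_outdeg D r (outdeg_pattern {r} B)))"
proof -
  let ?T = "\<lambda>B. trees_with_outdeg D r (outdeg_pattern {r} B)"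
  show ?thesis
    unfolding lower_trees_eq_UN
  proof (rule card_UN_disjoint)
    show "finite (Pow (D - {r}))" "\<forall>B\<in>Pow (D - {r}). finite (?T B)"
      using assms(1) finite_trees_with_outdeg by auto
    show "\<forall>B\<in>Pow (D - {r}). \<forall>B'\<in>Pow (D - {r}). B \<noteq> B' \<longrightarrow> ?T B \<inter> ?T B' = {}"
    proof (intro ballI impI equals0I)
      fix B B' E assume B: "B \<in> Pow (D - {r})" "B' \<in> Pow (D - {r})" "B \<noteq> B'" and "E \<in> ?T B \<inter> ?T B'"
      then have "\<forall>v\<in>D. outdeg_pattern {r} B v = outdeg_pattern {r} B' v"
        by (meson IntD1 IntD2 trees_with_outdeg_disjoint(2))
      then have "B = B'" using outdeg_pattern_eqD(2)[of "{r}" B D "{r}" B'] B assms(2) by auto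
      then show False using B(3) by simp
    qed
  qed
qed

lemma card_lower_trees:
  assumes "finite D" "r \<in> D"
  shows "real (card (lower_trees D r)) = lower_tree_number (card D)"
proof -
  let ?m = "card D" and ?T = "\<lambda>B. trees_with_outdeg D r (outdeg_pattern {r} B)"
  have "real (card (lower_trees D r)) = (\<Sum>B\<in>Pow (D - {r}). real (card (?T B)))"
    using card_lower_trees_eq_sum[OF assms] by simp
  also have "\<dots> = (\<Sum>B\<in>Pow (D - {r}). if 2 * card B + 2 = ?m then fact (?m - 2) / 2 ^ card B else 0)"
  proof (rule sum.cong[OF refl])
    fix B assume "B \<in> Pow (D - {r})"
    then have "{r} \<subseteq> D" "B \<subseteq> D" "{r} \<inter> B = {}" using assms(2) by auto
    from card_trees_with_outdeg_pattern[OF assms(1,2) this]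
    show "real (card (?T B)) = (if 2 * card B + 2 = ?m then fact (?m - 2) / 2 ^ card B else 0)"
      by (simp add: outdeg_pattern_def)
  qed
  also have "\<dots> = (\<Sum>k\<le>?m - 1. real ((?m - 1) choose k) *
      (if 2 * k + 2 = ?m then fact (?m - 2) / 2 ^ k else 0))"
    using sum_Pow_card[of "D - {r}" "\<lambda>k. if 2 * k + 2 = ?m then fact (?m - 2) / 2 ^ k else 0"] assms
    by simp
  also have "\<dots> = lower_tree_number ?m"
    unfolding sum_choose_if_double_plus lower_tree_number_def by (auto simp: dvd_diff_nat)
  finally show ?thesis .
qed

lemma upper_patternsD:
  "(P, B) \<in> upper_patterns U \<Longrightarrow> P \<subseteq> U \<and> card P = 2 \<and> B \<subseteq> U - P"
  unfolding upper_patterns_def by auto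

lemma card_upper_trees_eq_sum:
  assumes "finite U"
  shows "card (upper_trees U) =
    (\<Sum>(\<rho>, P, B)\<in>U \<times> upper_patterns U. card (trees_with_outdeg U \<rho> (outdeg_pattern P B)))"
proof -
  let ?T = "\<lambda>(\<rho>, P, B). trees_with_outdeg U \<rho> (outdeg_pattern P B)"
  have "card (upper_trees U) = (\<Sum>x\<in>U \<times> upper_patterns U. card (?T x))"
    unfolding upper_trees_eq_UN
  proof (rule card_UN_disjoint)
    show "finite (U \<times> upper_patterns U)" "\<forall>x\<in>U \<times> upper_patterns U. finite (?T x)"
      using assms finite_upper_patterns finite_trees_with_outdeg by auto
    show "\<forall>x\<in>U \<times> upper_patterns U. \<forall>y\<in>U \<times> upper_patterns U. x \<noteq> y \<longrightarrow> ?T x \<inter> ?T y = {}"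
    proof (intro ballI impI equals0I)
      fix x y E assume xy: "x \<in> U \<times> upper_patterns U" "y \<in> U \<times> upper_patterns U" "x \<noteq> y"
        and E: "E \<in> ?T x \<inter> ?T y"
      obtain \<rho> P B \<rho>' P' B' where x: "x = (\<rho>, P, B)" and y: "y = (\<rho>', P', B')"
        by (cases x, cases y) auto
      have "\<rho> = \<rho>'" "\<forall>v\<in>U. outdeg_pattern P B v = outdeg_pattern P' B' v"
        using E trees_with_outdeg_disjoint[of E U \<rho>] unfolding x y by auto
      moreover have "P = P' \<and> B = B'"
        using outdeg_pattern_eqD[of P B U P' B'] upper_patternsD xy calculation(2) unfolding x y
        by blast
      ultimately show False using xy(3) unfolding x y by simp
    qed
  qed
  then show ?thesis by (simp add: split_def)
qed

lemma card_upper_trees: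
  assumes "finite U"
  shows "real (card (upper_trees U)) = upper_tree_number (card U)"
proof -
  let ?u = "card U"
  let ?h = "\<lambda>k. if 2 * k + 3 = ?u then fact (?u - 1) / 2 ^ k else 0"
  have "real (card (upper_trees U)) =
      (\<Sum>\<rho>\<in>U. \<Sum>(P, B)\<in>upper_patterns U. real (card (trees_with_outdeg U \<rho> (outdeg_pattern P B))))"
    using card_upper_trees_eq_sum[OF assms] by (simp add: sum.cartesian_product split_def)
  also have "\<dots> = (\<Sum>(P, B)\<in>upper_patterns U.
      \<Sum>\<rho>\<in>U. real (card (trees_with_outdeg U \<rho> (outdeg_pattern P B))))"
    by (subst sum.swap) (simp add: split_def)
  also have "\<dots> = (\<Sum>(P, B)\<in>upper_patterns U. ?h (card B))"
  proof (intro sum.cong refl, clarify)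
    fix P B assume "(P, B) \<in> upper_patterns U"
    then have "P \<subseteq> U" "B \<subseteq> U" "P \<inter> B = {}" "P \<noteq> {}" and "card P = 2"
      using upper_patternsD[of P B U] by auto
    then show "(\<Sum>\<rho>\<in>U. real (card (trees_with_outdeg U \<rho> (outdeg_pattern P B)))) = ?h (card B)"
      using sum_roots_card_trees_with_outdeg_pattern[OF assms \<open>P \<subseteq> U\<close> \<open>B \<subseteq> U\<close>] by simp
  qed
  also have "\<dots> = (\<Sum>P\<in>{P. P \<subseteq> U \<and> card P = 2}. \<Sum>B\<in>Pow (U - P). ?h (card B))"
    unfolding upper_patterns_def using assms by (subst sum.Sigma) auto
  also have "\<dots> = (\<Sum>P\<in>{P. P \<subseteq> U \<and> card P = 2}. \<Sum>k\<le>?u - 2. real ((?u - 2) choose k) * ?h k)"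
  proof (rule sum.cong[OF refl])
    fix P assume "P \<in> {P. P \<subseteq> U \<and> card P = 2}"
    then have "card (U - P) = ?u - 2" using assms by (auto simp: card_Diff_subset finite_subset)
    then show "(\<Sum>B\<in>Pow (U - P). ?h (card B)) = (\<Sum>k\<le>?u - 2. real ((?u - 2) choose k) * ?h k)"
      using sum_Pow_card[of "U - P" ?h] assms by simp
  qed
  also have "\<dots> = real (?u choose 2) * (\<Sum>k\<le>?u - 2. real ((?u - 2) choose k) * ?h k)"
    using n_subsets[OF assms, of 2] by simp
  also have "\<dots> = upper_tree_number ?u"
    unfolding sum_choose_if_double_plus upper_tree_number_def by (auto simp: dvd_diff_nat)
  finally show ?thesis .
qed

section \<open>Networks with one reticulation as glued pairs of trees\<close>

definition one_reticulation_networks :: "'a set \<Rightarrow> ('a \<times> 'a) set set" where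
  "one_reticulation_networks V =
     {E. E \<subseteq> V \<times> V \<and> tree_child_network V E \<and> card {v \<in> V. is_reticulation E v} = 1}"

lemma phylo_network_outdeg_0_or_2:
  assumes N: "phylo_network V E" and v: "v \<in> V" "\<not> is_reticulation E v" "V \<noteq> {v}"
  shows "outdeg E v = 0 \<or> outdeg E v = 2"
proof -
  obtain \<rho> where "\<rho> \<in> V" "outdeg E \<rho> = 2 \<or> V = {\<rho>}"
    and "\<forall>v\<in>V - {\<rho>}. (indeg E v = 1 \<and> outdeg E v = 2) \<or> (indeg E v = 2 \<and> outdeg E v = 1) \<or>
        (indeg E v = 1 \<and> outdeg E v = 0)"
    using N unfolding phylo_network_def by blast
  then show ?thesis using v unfolding is_reticulation_def by (cases "v = \<rho>") auto
qed

lemma tree_child_if_single_reticulation: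
  assumes N: "phylo_network V E" and ret: "{v \<in> V. is_reticulation E v} = {r}"
  shows "tree_child_network V E"
  unfolding tree_child_network_def
proof (intro conjI N ballI impI)
  fix v assume v: "v \<in> V" and out: "outdeg E v \<noteq> 0"
  have fin: "finite V" and sub: "E \<subseteq> V \<times> V" and ac: "acyclic E"
    using N by (simp_all add: phylo_network_def)
  have "\<exists>w. (v, w) \<in> E \<and> w \<noteq> r"
  proof (cases "v = r")
    case True
    obtain w where w: "(v, w) \<in> E" using out outdeg_pos_iff[OF fin sub, of v] by auto
    have "w \<noteq> r"
    proof
      assume "w = r"
      then have "(r, r) \<in> E" using w True by simp
      then show False using ac unfolding acyclic_def by (blast intro: r_into_trancl)
    qed
    then show ?thesis using w by blast
  next
    case False
    then have "\<not> is_reticulation E v" "V \<noteq> {v}" using ret v by (auto simp: set_eq_iff)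
    then have "card {w. (v, w) \<in> E} = 2"
      using phylo_network_outdeg_0_or_2[OF N v] out unfolding outdeg_def by auto
    moreover have "card {w. (v, w) \<in> E} \<le> card {r}" if "{w. (v, w) \<in> E} \<subseteq> {r}"
      using card_mono[OF _ that] by simp
    ultimately have "\<not> {w. (v, w) \<in> E} \<subseteq> {r}" by auto
    then show ?thesis by blast
  qed
  then obtain w where w: "(v, w) \<in> E" "w \<noteq> r" by blast
  then have "w \<in> V" using sub by auto
  then have "\<not> is_reticulation E w" using ret w(2) by (auto simp: set_eq_iff)
  then show "\<exists>w. (v, w) \<in> E \<and> \<not> is_reticulation E w" using w(1) by blast
qed

lemma rtrancl_imp_pred: "(x, v) \<in> E\<^sup>* \<Longrightarrow> v \<noteq> x \<Longrightarrow> \<exists>u. (u, v) \<in> E"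
  by (auto elim: rtranclE)

lemma acyclic_Un_one_way:
  assumes AX: "A \<subseteq> X \<times> X" and BY: "B \<subseteq> Y \<times> Y" and CYX: "C \<subseteq> Y \<times> X"
    and XY: "X \<inter> Y = {}" and acA: "acyclic A" and acB: "acyclic B"
  shows "acyclic (A \<union> B \<union> C)"
proof -
  let ?R = "A \<union> B \<union> C"
  have stay_X: "(x, y) \<in> A\<^sup>+" if "(x, y) \<in> ?R\<^sup>+" "x \<in> X" for x y
    using that
  proof (induction rule: trancl_induct)
    case (step y z)
    then have "y \<in> X" using AX by (auto dest: trancl_subset_Sigma[THEN subsetD])
    then have "(y, z) \<in> A" using step(2) BY CYX XY by auto
    with step show ?case by (auto intro: trancl_into_trancl)
  qed (use BY CYX XY in auto)
  have leave_Y: "(x, y) \<in> B\<^sup>+ \<or> y \<in> X" if "(x, y) \<in> ?R\<^sup>+" "x \<in> Y" for x y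
    using that
  proof (induction rule: trancl_induct)
    case (step y z)
    then show ?case using AX BY CYX XY by (auto intro: trancl_into_trancl)
  qed (use AX CYX XY in auto)
  show ?thesis unfolding acyclic_def
  proof (intro allI notI)
    fix x assume xx: "(x, x) \<in> ?R\<^sup>+"
    have "?R \<subseteq> (X \<union> Y) \<times> (X \<union> Y)" using AX BY CYX by auto
    then have "x \<in> X \<union> Y" using trancl_subset_Sigma xx by blast
    then show False
      using stay_X[OF xx] leave_Y[OF xx] acA acB XY unfolding acyclic_def by blast
  qed
qed

text \<open>The parents of the reticulation are recovered from the upper tree as its unary vertices.\<close>

definition glue :: "'a set \<Rightarrow> 'a \<Rightarrow> ('a \<times> 'a) set \<Rightarrow> ('a \<times> 'a) set \<Rightarrow> ('a \<times> 'a) set" where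
  "glue U r ED EU = ED \<union> EU \<union> {p \<in> U. outdeg EU p = 1} \<times> {r}"

lemma finite_lower_trees: "finite D \<Longrightarrow> finite (lower_trees D r)"
  by (rule finite_subset[of _ "Pow (D \<times> D)"]) (auto simp: lower_trees_def rooted_tree_def)

lemma finite_upper_trees: "finite U \<Longrightarrow> finite (upper_trees U)"
  by (rule finite_subset[of _ "Pow (U \<times> U)"]) (auto simp: upper_trees_def rooted_tree_def)

definition glue_data :: "'a set \<Rightarrow> ('a \<times> 'a set \<times> ('a \<times> 'a) set \<times> ('a \<times> 'a) set) set" where
  "glue_data V = (SIGMA r:V. SIGMA D:{D. r \<in> D \<and> D \<subseteq> V}. lower_trees D r \<times> upper_trees (V - D))"

locale gluing =
  fixes V D :: "'a set" and r :: 'a and ED EU :: "('a \<times> 'a) set"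
  assumes finite_V: "finite V" and r_in_D: "r \<in> D" and D_subset: "D \<subseteq> V"
    and lower: "ED \<in> lower_trees D r" and upper: "EU \<in> upper_trees (V - D)"
begin

abbreviation "U \<equiv> V - D"
abbreviation "P \<equiv> {p \<in> U. outdeg EU p = 1}"
abbreviation "G \<equiv> glue U r ED EU"

definition upper_root :: 'a where
  "upper_root = (THE \<rho>. rooted_tree U EU \<rho>)"

lemma rooted_tree_upper: "rooted_tree U EU upper_root"
proof -
  obtain \<rho> where \<rho>: "rooted_tree U EU \<rho>" using upper unfolding upper_trees_def by blast
  have "x = \<rho>" if "rooted_tree U EU x" for x using rooted_tree_root_unique[OF that \<rho>] .
  then show ?thesis unfolding upper_root_def by (rule theI[where P = "rooted_tree U EU", OF \<rho>])
qed

lemma rooted_tree_lower: "rooted_tree D ED r"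
  using lower unfolding lower_trees_def by blast

lemma outdeg_lower_root: "outdeg ED r = 1"
  using lower unfolding lower_trees_def by blast

lemma outdeg_lower_cases: "v \<in> D \<Longrightarrow> v \<noteq> r \<Longrightarrow> outdeg ED v = 0 \<or> outdeg ED v = 2"
  using lower unfolding lower_trees_def by blast

lemma ED_subset: "ED \<subseteq> D \<times> D"
  using rooted_tree_lower by (rule rooted_tree_subset)

lemma EU_subset: "EU \<subseteq> U \<times> U"
  using rooted_tree_upper by (rule rooted_tree_subset)

lemma finite_U: "finite U"
  using finite_V by simp

lemma card_P: "card P = 2"
  using upper unfolding upper_trees_def by simp

lemma glue_eq_Un: "G = ED \<union> EU \<union> P \<times> {r}"
  unfolding glue_def ..

lemma glue_subset: "G \<subseteq> V \<times> V"
  using ED_subset EU_subset D_subset r_in_D unfolding glue_eq_Un by blast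

lemma preds_upper: "v \<in> U \<Longrightarrow> {u. (u, v) \<in> G} = {u. (u, v) \<in> EU}"
  using ED_subset r_in_D unfolding glue_eq_Un by auto

lemma succs_upper: "v \<in> U \<Longrightarrow> {w. (v, w) \<in> G} = {w. (v, w) \<in> EU} \<union> (if v \<in> P then {r} else {})"
  using ED_subset unfolding glue_eq_Un by auto

lemma preds_lower: "v \<in> D \<Longrightarrow> {u. (u, v) \<in> G} = {u. (u, v) \<in> ED} \<union> (if v = r then P else {})"
  using EU_subset unfolding glue_eq_Un by auto

lemma succs_lower: "v \<in> D \<Longrightarrow> {w. (v, w) \<in> G} = {w. (v, w) \<in> ED}"
  using EU_subset unfolding glue_eq_Un by auto

lemma indeg_upper: "v \<in> U \<Longrightarrow> indeg G v = (if v = upper_root then 0 else 1)"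
  using preds_upper rooted_tree_root_indeg[OF rooted_tree_upper] rooted_tree_upper
  unfolding indeg_def rooted_tree_def by auto

lemma outdeg_upper: "v \<in> U \<Longrightarrow> outdeg G v = (if outdeg EU v = 0 then 0 else 2)"
proof -
  assume v: "v \<in> U"
  have "r \<notin> {w. (v, w) \<in> EU}" using EU_subset r_in_D by auto
  then have "outdeg G v = outdeg EU v + (if v \<in> P then 1 else 0)"
    unfolding outdeg_def succs_upper[OF v] using finite_successors[OF finite_U EU_subset] by auto
  moreover have "outdeg EU v \<le> 2" using upper v unfolding upper_trees_def by auto
  ultimately show ?thesis using v by auto
qed

lemma indeg_lower: "v \<in> D \<Longrightarrow> indeg G v = (if v = r then 2 else 1)"
proof -
  assume v: "v \<in> D"
  have "{u. (u, r) \<in> ED} = {}"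
    using rooted_tree_root_indeg[OF rooted_tree_lower]
      finite_predecessors[OF finite_subset[OF D_subset finite_V] ED_subset, of r]
    unfolding indeg_def by simp
  then show ?thesis
    using preds_lower[OF v] card_P rooted_tree_lower v unfolding indeg_def rooted_tree_def by auto
qed

lemma outdeg_lower: "v \<in> D \<Longrightarrow> outdeg G v = outdeg ED v"
  unfolding outdeg_def by (simp add: succs_lower)

lemma glue_is_reticulation_iff:
  assumes "v \<in> V" shows "is_reticulation G v \<longleftrightarrow> v = r"
proof (cases "v \<in> D")
  case True
  then show ?thesis using indeg_lower[OF True] outdeg_lower[OF True] outdeg_lower_root
      outdeg_lower_cases[OF True] unfolding is_reticulation_def by auto
next
  case False
  then show ?thesis using assms indeg_upper outdeg_upper r_in_D unfolding is_reticulation_def by auto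
qed

lemma glue_reticulations: "{v \<in> V. is_reticulation G v} = {r}"
  using glue_is_reticulation_iff r_in_D D_subset by auto

lemma glue_acyclic: "acyclic G"
  unfolding glue_eq_Un
proof (rule acyclic_Un_one_way[OF ED_subset EU_subset])
  show "P \<times> {r} \<subseteq> U \<times> D" using r_in_D by auto
  show "acyclic ED" "acyclic EU"
    using rooted_tree_lower rooted_tree_upper unfolding rooted_tree_def by auto
qed auto

lemma glue_reachable: "v \<in> V \<Longrightarrow> (upper_root, v) \<in> G\<^sup>*"
proof -
  assume v: "v \<in> V"
  have mono: "ED\<^sup>* \<subseteq> G\<^sup>*" "EU\<^sup>* \<subseteq> G\<^sup>*" unfolding glue_eq_Un by (rule rtrancl_mono, blast)+
  show ?thesis
  proof (cases "v \<in> U")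
    case True
    then show ?thesis using rooted_tree_upper mono unfolding rooted_tree_def by auto
  next
    case False
    obtain p where p: "p \<in> P" using card_P by (metis card.empty ex_in_conv zero_neq_numeral)
    then have "(upper_root, p) \<in> G\<^sup>*" using rooted_tree_upper mono unfolding rooted_tree_def by auto
    moreover have "(p, r) \<in> G" using p unfolding glue_eq_Un by auto
    moreover have "(r, v) \<in> G\<^sup>*" using False v rooted_tree_lower mono unfolding rooted_tree_def by auto
    ultimately show ?thesis by (meson rtrancl.rtrancl_into_rtrancl rtrancl_trans)
  qed
qed

lemma glue_phylo_network: "phylo_network V G"
  unfolding phylo_network_def
proof (intro conjI bexI[of _ upper_root] ballI)
  have root: "upper_root \<in> U" using rooted_tree_upper unfolding rooted_tree_def by simp
  show "finite V" "G \<subseteq> V \<times> V" "acyclic G" using finite_V glue_subset glue_acyclic by auto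
  show "upper_root \<in> V" using root by simp
  show "(upper_root, v) \<in> G\<^sup>*" if "v \<in> V" for v using that by (rule glue_reachable)
  show "indeg G upper_root = 0" using indeg_upper[OF root] by simp
  have "2 \<le> card U" using card_P card_mono[OF finite_U, of P] by auto
  then obtain v where "v \<in> U" "v \<noteq> upper_root" using root
    by (metis card_1_singletonE card_le_Suc0_iff_eq finite_U not_less_eq_eq numeral_2_eq_2)
  then have "outdeg EU upper_root \<noteq> 0"
    using rooted_tree_root_outdeg_pos[OF rooted_tree_upper] by fastforce
  then show "outdeg G upper_root = 2 \<or> V = {upper_root}" using outdeg_upper[OF root] by simp
  show "indeg G v = 1 \<and> outdeg G v = 2 \<or> indeg G v = 2 \<and> outdeg G v = 1 \<or>
      indeg G v = 1 \<and> outdeg G v = 0" if "v \<in> V - {upper_root}" for v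
  proof (cases "v \<in> D")
    case True
    then show ?thesis using indeg_lower[OF True] outdeg_lower[OF True] outdeg_lower_root
        outdeg_lower_cases[OF True] by auto
  next
    case False
    then show ?thesis using that indeg_upper outdeg_upper by auto
  qed
qed

lemma glue_in_one_reticulation_networks: "G \<in> one_reticulation_networks V"
  unfolding one_reticulation_networks_def
  using glue_subset tree_child_if_single_reticulation[OF glue_phylo_network glue_reticulations] glue_reticulations
  by simp

lemma glue_descendants: "G\<^sup>* `` {r} = D"
proof
  show "D \<subseteq> G\<^sup>* `` {r}"
    using rooted_tree_lower rtrancl_mono[of ED G] unfolding rooted_tree_def glue_eq_Un by auto
  show "G\<^sup>* `` {r} \<subseteq> D"
  proof
    fix v assume "v \<in> G\<^sup>* `` {r}"
    then have "(r, v) \<in> G\<^sup>*" by simp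
    then show "v \<in> D"
    proof (induction rule: rtrancl_induct)
      case (step w v)
      then show ?case using succs_lower[of w] ED_subset by auto
    qed (rule r_in_D)
  qed
qed

lemma glue_restrict_lower: "G \<inter> D \<times> D = ED"
  using ED_subset EU_subset unfolding glue_eq_Un by blast

lemma glue_restrict_upper: "G \<inter> U \<times> U = EU"
  using ED_subset EU_subset r_in_D unfolding glue_eq_Un by blast

end

locale single_reticulation_network =
  fixes V :: "'a set" and E :: "('a \<times> 'a) set" and r :: 'a
  assumes finite_V: "finite V" and network: "E \<in> one_reticulation_networks V"
    and r_in_V: "r \<in> V" and reticulation: "is_reticulation E r"
begin

abbreviation "D \<equiv> E\<^sup>* `` {r}"
abbreviation "U \<equiv> V - D"
abbreviation "P \<equiv> {u. (u, r) \<in> E}"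

lemma phylo_network_E: "phylo_network V E"
  using network unfolding one_reticulation_networks_def tree_child_network_def by blast

lemma E_subset: "E \<subseteq> V \<times> V"
  using network unfolding one_reticulation_networks_def by blast

lemma acyclic_E: "acyclic E"
  using phylo_network_E unfolding phylo_network_def by blast

lemma reticulations: "{v \<in> V. is_reticulation E v} = {r}"
proof -
  have "card {v \<in> V. is_reticulation E v} = 1"
    using network unfolding one_reticulation_networks_def by blast
  then obtain x where "{v \<in> V. is_reticulation E v} = {x}" by (rule card_1_singletonE)
  moreover have "r \<in> {v \<in> V. is_reticulation E v}" using r_in_V reticulation by simp
  ultimately show ?thesis by simp
qed

lemma outdeg_0_or_2: "v \<in> V \<Longrightarrow> v \<noteq> r \<Longrightarrow> outdeg E v = 0 \<or> outdeg E v = 2"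
  using phylo_network_outdeg_0_or_2[OF phylo_network_E] reticulations r_in_V by blast

lemma indeg_1: "(u, v) \<in> E \<Longrightarrow> v \<noteq> r \<Longrightarrow> indeg E v = 1"
proof -
  assume uv: "(u, v) \<in> E" and "v \<noteq> r"
  then have v: "v \<in> V" "\<not> is_reticulation E v" using E_subset reticulations by auto
  have "indeg E v \<noteq> 0"
    using uv finite_predecessors[OF finite_V E_subset, of v] unfolding indeg_def by auto
  moreover obtain \<rho> where "\<rho> \<in> V" "indeg E \<rho> = 0"
    and "\<forall>v\<in>V - {\<rho>}. (indeg E v = 1 \<and> outdeg E v = 2) \<or> (indeg E v = 2 \<and> outdeg E v = 1) \<or>
        (indeg E v = 1 \<and> outdeg E v = 0)"
    using phylo_network_E unfolding phylo_network_def by blast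
  ultimately show ?thesis using v unfolding is_reticulation_def by (cases "v = \<rho>") auto
qed

lemma descendant_succ: "(u, v) \<in> E \<Longrightarrow> u \<in> D \<Longrightarrow> v \<in> D"
  by (auto intro: rtrancl_into_rtrancl)

lemma descendant_pred: "(u, v) \<in> E \<Longrightarrow> v \<in> D \<Longrightarrow> v \<noteq> r \<Longrightarrow> u \<in> D"
proof -
  assume uv: "(u, v) \<in> E" and v: "v \<in> D" "v \<noteq> r"
  obtain w where w: "(r, w) \<in> E\<^sup>*" "(w, v) \<in> E" using v by (auto elim: rtranclE)
  have "card {u. (u, v) \<in> E} = 1" using indeg_1[OF uv v(2)] unfolding indeg_def .
  then have "u = w" using uv w(2) by (metis card_1_singletonE mem_Collect_eq singletonD)
  then show "u \<in> D" using w(1) by simp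
qed

lemma D_subset: "D \<subseteq> V"
  using r_in_V E_subset by (auto elim: rtranclE)

lemma parents_not_descendants: "P \<inter> D = {}"
proof -
  have "(r, r) \<notin> E\<^sup>+" using acyclic_E unfolding acyclic_def by blast
  then show ?thesis by (auto intro: rtrancl_into_trancl1)
qed

lemma parents_subset: "P \<subseteq> U"
  using E_subset parents_not_descendants by auto

lemma card_parents: "card P = 2"
  using reticulation unfolding is_reticulation_def indeg_def by simp

lemma edges: "E = E \<inter> D \<times> D \<union> E \<inter> U \<times> U \<union> P \<times> {r}"
proof -
  have "(u, v) \<in> E \<inter> D \<times> D \<union> E \<inter> U \<times> U \<union> P \<times> {r}" if uv: "(u, v) \<in> E" for u v
  proof -
    have "u \<in> V" "v \<in> V" using uv E_subset by auto
    then show ?thesis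
      using uv descendant_succ[OF uv] descendant_pred[OF uv] by (cases "u \<in> D"; cases "v \<in> D") auto
  qed
  then show ?thesis by auto
qed

lemma succs_upper: "u \<in> U \<Longrightarrow> {w. (u, w) \<in> E \<inter> U \<times> U} = {w. (u, w) \<in> E} - {r}"
  using E_subset descendant_pred by auto

lemma outdeg_upper: "u \<in> U \<Longrightarrow> outdeg (E \<inter> U \<times> U) u = outdeg E u - (if u \<in> P then 1 else 0)"
  unfolding outdeg_def
  using succs_upper finite_successors[OF finite_V E_subset] by (auto simp: card_Diff_singleton)

lemma outdeg_upper_cases:
  assumes "u \<in> U"
  shows "outdeg (E \<inter> U \<times> U) u = (if u \<in> P then 1 else outdeg E u)"
    and "outdeg E u = 0 \<or> outdeg E u = 2"
proof -
  show od: "outdeg E u = 0 \<or> outdeg E u = 2" using assms outdeg_0_or_2 by auto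
  have "outdeg E u \<noteq> 0" if "u \<in> P"
    using that outdeg_pos_iff[OF finite_V E_subset, of u] by auto
  then show "outdeg (E \<inter> U \<times> U) u = (if u \<in> P then 1 else outdeg E u)"
    using outdeg_upper[OF assms] od by auto
qed

lemma upper_parents: "{u \<in> U. outdeg (E \<inter> U \<times> U) u = 1} = P"
  using outdeg_upper_cases parents_subset by fastforce

lemma rooted_tree_lower: "rooted_tree D (E \<inter> D \<times> D) r"
  unfolding rooted_tree_def
proof (intro conjI ballI)
  show "finite D" using finite_subset[OF D_subset finite_V] .
  show "acyclic (E \<inter> D \<times> D)" using acyclic_E by (rule acyclic_subset) simp
  show "(r, v) \<in> (E \<inter> D \<times> D)\<^sup>*" if "v \<in> D" for v
  proof -
    have "(r, v) \<in> E\<^sup>*" using that by simp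
    then show ?thesis
    proof (induction rule: rtrancl_induct)
      case (step w v)
      then have "(w, v) \<in> E \<inter> D \<times> D" by (auto intro: rtrancl_into_rtrancl)
      with step.IH show ?case by (rule rtrancl_into_rtrancl)
    qed simp
  qed
  show "indeg (E \<inter> D \<times> D) v = 1" if v: "v \<in> D - {r}" for v
  proof -
    have "{u. (u, v) \<in> E \<inter> D \<times> D} = {u. (u, v) \<in> E}" using v descendant_pred by auto
    moreover obtain u where "(u, v) \<in> E" using rtrancl_imp_pred[of r v E] v by auto
    ultimately show ?thesis using indeg_1 v unfolding indeg_def by auto
  qed
qed auto

lemma lower_tree: "E \<inter> D \<times> D \<in> lower_trees D r"
proof -
  have "outdeg (E \<inter> D \<times> D) v = outdeg E v" if "v \<in> D" for v
    using that descendant_succ unfolding outdeg_def by (metis (no_types, lifting) IntI mem_Sigma_iff Int_iff)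
  moreover have "outdeg E r = 1" using reticulation unfolding is_reticulation_def by simp
  ultimately show ?thesis
    using rooted_tree_lower outdeg_0_or_2 D_subset unfolding lower_trees_def by auto
qed

lemma rooted_tree_upper: "\<exists>\<rho>. rooted_tree U (E \<inter> U \<times> U) \<rho>"
proof -
  obtain \<rho> where \<rho>: "\<rho> \<in> V" "\<forall>v\<in>V. (\<rho>, v) \<in> E\<^sup>*" "indeg E \<rho> = 0"
    using phylo_network_E unfolding phylo_network_def by blast
  have "\<rho> \<noteq> r" using \<rho>(3) reticulation unfolding is_reticulation_def by auto
  have "\<rho> \<notin> D"
  proof
    assume "\<rho> \<in> D"
    moreover have "(\<rho>, r) \<in> E\<^sup>+" using \<rho>(2) r_in_V \<open>\<rho> \<noteq> r\<close> by (auto simp: rtrancl_eq_or_trancl)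
    ultimately have "(r, r) \<in> E\<^sup>+" by (auto intro: rtrancl_trancl_trancl)
    then show False using acyclic_E unfolding acyclic_def by blast
  qed
  have reach: "(\<rho>, v) \<in> (E \<inter> U \<times> U)\<^sup>*" if "v \<in> U" for v
  proof -
    have "(\<rho>, v) \<in> E\<^sup>*" using \<rho>(2) that by simp
    then show ?thesis using that
    proof (induction rule: rtrancl_induct)
      case (step w v)
      then have "w \<in> U" using E_subset descendant_succ by blast
      then show ?case using step by (auto intro: rtrancl_into_rtrancl)
    qed simp
  qed
  have "rooted_tree U (E \<inter> U \<times> U) \<rho>"
    unfolding rooted_tree_def
  proof (intro conjI ballI)
    show "acyclic (E \<inter> U \<times> U)" using acyclic_E by (rule acyclic_subset) simp
    show "indeg (E \<inter> U \<times> U) v = 1" if v: "v \<in> U - {\<rho>}" for v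
    proof -
      have "{u. (u, v) \<in> E \<inter> U \<times> U} = {u. (u, v) \<in> E}"
        using v E_subset descendant_succ by blast
      moreover obtain u where "(u, v) \<in> E" using rtrancl_imp_pred[of \<rho> v E] \<rho>(2) v by auto
      moreover have "v \<noteq> r" using v by auto
      ultimately show ?thesis using indeg_1 unfolding indeg_def by auto
    qed
  qed (use finite_V \<rho> \<open>\<rho> \<notin> D\<close> reach in auto)
  then show ?thesis by blast
qed

lemma upper_tree: "E \<inter> U \<times> U \<in> upper_trees U"
proof -
  have "outdeg (E \<inter> U \<times> U) u \<le> 2" if "u \<in> U" for u
    using outdeg_upper_cases[OF that] by auto
  then show ?thesis
    using rooted_tree_upper upper_parents card_parents unfolding upper_trees_def by auto
qed

lemma glue_eq: "glue U r (E \<inter> D \<times> D) (E \<inter> U \<times> U) = E"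
  unfolding glue_def upper_parents using edges by simp

lemma in_glue_data: "(r, D, E \<inter> D \<times> D, E \<inter> U \<times> U) \<in> glue_data V"
  using lower_tree upper_tree D_subset r_in_V unfolding glue_data_def by simp

end

lemma gluing_if_glue_data:
  "finite V \<Longrightarrow> (r, D, ED, EU) \<in> glue_data V \<Longrightarrow> gluing V D r ED EU"
  unfolding glue_data_def gluing_def by simp

lemma glue_inj:
  assumes gx: "gluing V D r ED EU" and gy: "gluing V D' r' ED' EU'"
    and eq: "glue (V - D) r ED EU = glue (V - D') r' ED' EU'"
  shows "r = r' \<and> D = D' \<and> ED = ED' \<and> EU = EU'"
proof -
  have "{r} = {r'}" using eq gluing.glue_reticulations[OF gx] gluing.glue_reticulations[OF gy] by simp
  then have r: "r = r'" by simp
  then have D: "D = D'" using eq gluing.glue_descendants[OF gx] gluing.glue_descendants[OF gy] by simp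
  have "ED = ED'"
    using eq gluing.glue_restrict_lower[OF gx] gluing.glue_restrict_lower[OF gy] unfolding r D by simp
  moreover have "EU = EU'"
    using eq gluing.glue_restrict_upper[OF gx] gluing.glue_restrict_upper[OF gy] unfolding r D by simp
  ultimately show ?thesis using r D by simp
qed

theorem bij_betw_glue_one_reticulation_networks:
  assumes "finite V"
  shows "bij_betw (\<lambda>(r, D, ED, EU). glue (V - D) r ED EU) (glue_data V) (one_reticulation_networks V)"
proof (rule bij_betwI')
  fix x y assume x_in: "x \<in> glue_data V" and y_in: "y \<in> glue_data V"
  obtain r D ED EU r' D' ED' EU' where x: "x = (r, D, ED, EU)" and y: "y = (r', D', ED', EU')"
    by (cases x, cases y) blast
  have gx: "gluing V D r ED EU" using gluing_if_glue_data[OF assms] x_in unfolding x by simp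
  have gy: "gluing V D' r' ED' EU'" using gluing_if_glue_data[OF assms] y_in unfolding y by simp
  show "((\<lambda>(r, D, ED, EU). glue (V - D) r ED EU) x = (\<lambda>(r, D, ED, EU). glue (V - D) r ED EU) y) =
      (x = y)"
  proof
    assume "(\<lambda>(r, D, ED, EU). glue (V - D) r ED EU) x = (\<lambda>(r, D, ED, EU). glue (V - D) r ED EU) y"
    then have "glue (V - D) r ED EU = glue (V - D') r' ED' EU'" unfolding x y by simp
    from glue_inj[OF gx gy this] show "x = y" unfolding x y by simp
  qed simp
next
  fix x assume x_in: "x \<in> glue_data V"
  obtain r D ED EU where x: "x = (r, D, ED, EU)" by (cases x) blast
  have "gluing V D r ED EU" using gluing_if_glue_data[OF assms] x_in unfolding x by simp
  then show "(\<lambda>(r, D, ED, EU). glue (V - D) r ED EU) x \<in> one_reticulation_networks V"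
    unfolding x by (simp add: gluing.glue_in_one_reticulation_networks)
next
  fix E assume E: "E \<in> one_reticulation_networks V"
  then have "card {v \<in> V. is_reticulation E v} = 1" unfolding one_reticulation_networks_def by blast
  then obtain r where "{v \<in> V. is_reticulation E v} = {r}" by (rule card_1_singletonE)
  then have N: "single_reticulation_network V E r"
    using assms E by unfold_locales auto
  let ?D = "E\<^sup>* `` {r}"
  let ?x = "(r, ?D, E \<inter> ?D \<times> ?D, E \<inter> (V - ?D) \<times> (V - ?D))"
  have "?x \<in> glue_data V" by (rule single_reticulation_network.in_glue_data[OF N])
  moreover have "E = (\<lambda>(r, D, ED, EU). glue (V - D) r ED EU) ?x"
    using single_reticulation_network.glue_eq[OF N] by simp
  ultimately show "\<exists>x\<in>glue_data V. E = (\<lambda>(r, D, ED, EU). glue (V - D) r ED EU) x" by blast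
qed

lemma card_one_reticulation_networks:
  assumes "finite V"
  shows "card (one_reticulation_networks V) =
    (\<Sum>r\<in>V. \<Sum>D\<in>{D. r \<in> D \<and> D \<subseteq> V}. card (lower_trees D r) * card (upper_trees (V - D)))"
proof -
  have fin: "finite (lower_trees D r \<times> upper_trees (V - D))" if "D \<subseteq> V" for D r
    using finite_lower_trees[OF finite_subset[OF that assms]] finite_upper_trees[of "V - D"] assms
    by (intro finite_cartesian_product) auto
  have "card (one_reticulation_networks V) = card (glue_data V)"
    using bij_betw_same_card[OF bij_betw_glue_one_reticulation_networks[OF assms]] by simp
  also have "\<dots> = (\<Sum>r\<in>V. card (SIGMA D:{D. r \<in> D \<and> D \<subseteq> V}. lower_trees D r \<times> upper_trees (V - D)))"
    unfolding glue_data_def using assms fin by (intro card_SigmaI) (auto intro: finite_SigmaI)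
  also have "\<dots> = (\<Sum>r\<in>V. \<Sum>D\<in>{D. r \<in> D \<and> D \<subseteq> V}. card (lower_trees D r \<times> upper_trees (V - D)))"
    using assms fin by (intro sum.cong refl card_SigmaI) auto
  finally show ?thesis by (simp add: card_cartesian_product)
qed

section \<open>The exponential generating function\<close>

lemma sum_subsets_containing:
  fixes g :: "nat \<Rightarrow> real"
  assumes "finite V" "r \<in> V"
  shows "(\<Sum>D\<in>{D. r \<in> D \<and> D \<subseteq> V}. g (card D)) =
    (\<Sum>k\<le>card V - 1. real ((card V - 1) choose k) * g (Suc k))"
proof -
  have "bij_betw (insert r) (Pow (V - {r})) {D. r \<in> D \<and> D \<subseteq> V}"
    using assms(2) by (intro bij_betwI[where g = "\<lambda>D. D - {r}"]) auto
  then have "(\<Sum>D\<in>{D. r \<in> D \<and> D \<subseteq> V}. g (card D)) = (\<Sum>D\<in>Pow (V - {r}). g (card (insert r D)))"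
    using sum.reindex_bij_betw[of "insert r" _ _ "\<lambda>D. g (card D)"] by simp
  also have "\<dots> = (\<Sum>D\<in>Pow (V - {r}). g (Suc (card D)))"
  proof (rule sum.cong[OF refl])
    fix D assume "D \<in> Pow (V - {r})"
    then have "finite D" "r \<notin> D" using assms(1) by (auto intro: finite_subset)
    then show "g (card (insert r D)) = g (Suc (card D))" by simp
  qed
  also have "\<dots> = (\<Sum>k\<le>card V - 1. real ((card V - 1) choose k) * g (Suc k))"
    using sum_Pow_card[of "V - {r}" "\<lambda>k. g (Suc k)"] assms by simp
  finally show ?thesis .
qed

lemma T1_eq_convolution:
  "real (T1 n) =
    real n * (\<Sum>k\<le>n - 1. real ((n - 1) choose k) * (lower_tree_number (Suc k) * upper_tree_number (n - Suc k)))"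
proof -
  let ?V = "{1..n}"
  have "real (T1 n) = (\<Sum>r\<in>?V. \<Sum>D\<in>{D. r \<in> D \<and> D \<subseteq> ?V}.
      real (card (lower_trees D r)) * real (card (upper_trees (?V - D))))"
    using card_one_reticulation_networks[of ?V]
    unfolding T1_def one_reticulation_networks_def by simp
  also have "\<dots> = (\<Sum>r\<in>?V. \<Sum>D\<in>{D. r \<in> D \<and> D \<subseteq> ?V}.
      lower_tree_number (card D) * upper_tree_number (n - card D))"
    by (intro sum.cong refl)
      (auto simp: card_lower_trees card_upper_trees card_Diff_subset finite_subset)
  also have "\<dots> = (\<Sum>r\<in>?V. \<Sum>k\<le>n - 1. real ((n - 1) choose k) *
      (lower_tree_number (Suc k) * upper_tree_number (n - Suc k)))"
  proof (rule sum.cong[OF refl])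
    fix r assume "r \<in> ?V"
    then show "(\<Sum>D\<in>{D. r \<in> D \<and> D \<subseteq> ?V}. lower_tree_number (card D) * upper_tree_number (n - card D)) =
        (\<Sum>k\<le>n - 1. real ((n - 1) choose k) * (lower_tree_number (Suc k) * upper_tree_number (n - Suc k)))"
      using sum_subsets_containing[of ?V r "\<lambda>m. lower_tree_number m * upper_tree_number (n - m)"]
      by simp
  qed
  finally show ?thesis by simp
qed

lemma gbinomial_times_minus_two_pow:
  "((a::real) gchoose k) * (-2) ^ k = 2 ^ k * pochhammer (- a) k / fact k"
proof -
  have "(-2::real) ^ k = (-1) ^ k * 2 ^ k" by (simp flip: power_mult_distrib)
  then show ?thesis by (simp add: gbinomial_pochhammer)
qed

lemma fact_double_pochhammer: "fact (2 * n) = 2 ^ n * 2 ^ n * pochhammer (1/2) n * (fact n :: real)"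
  using fact_double[of n] by (simp add: power_add mult_2)

lemma gbinomial_half_Suc:
  "- (((1/2::real) gchoose Suc n) * (-2) ^ Suc n) = fact (2 * n) / (2 ^ n * fact n * fact (Suc n))"
proof -
  have "- (((1/2::real) gchoose Suc n) * (-2) ^ Suc n) = 2 ^ n * pochhammer (1/2) n / fact (Suc n)"
    unfolding gbinomial_times_minus_two_pow by (simp add: pochhammer_rec)
  then show ?thesis unfolding fact_double_pochhammer by simp
qed

lemma gbinomial_minus_three_halves:
  "((-3/2::real) gchoose n) * (-2) ^ n = fact (2 * Suc n) / (2 ^ Suc n * fact n * fact (Suc n))"
proof -
  have "((-3/2::real) gchoose n) * (-2) ^ n = 2 ^ Suc n * pochhammer (1/2) (Suc n) / fact n"
    unfolding gbinomial_times_minus_two_pow by (simp add: pochhammer_rec)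
  then show ?thesis unfolding fact_double_pochhammer by (simp add: field_simps del: fact_Suc)
qed

lemma lower_tree_number_coeff:
  "lower_tree_number (2 * n + 2) / fact (2 * n + 1) = - (((1/2) gchoose Suc n) * (-2) ^ Suc n)"
proof -
  have "real ((2 * n + 1) choose n) = fact (2 * n + 1) / (fact n * fact (Suc n))"
    by (subst binomial_fact) (simp_all add: Suc_diff_le)
  then show ?thesis
    unfolding gbinomial_half_Suc lower_tree_number_def by (simp add: field_simps del: fact_Suc)
qed

lemma upper_tree_number_coeff:
  "upper_tree_number (2 * n + 3) / fact (2 * n + 3) = ((-3/2) gchoose n) * (-2) ^ n"
proof -
  have u: "upper_tree_number (2 * n + 3) =
      real ((2 * n + 3) choose 2) * real ((2 * n + 1) choose n) * fact (2 * Suc n) / 2 ^ n"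
    unfolding upper_tree_number_def by simp
  have c1: "real ((2 * n + 1) choose n) = fact (2 * n + 1) / (fact n * fact (Suc n))"
    by (subst binomial_fact) (simp_all add: Suc_diff_le)
  have c2: "real ((2 * n + 3) choose 2) = fact (2 * n + 3) / (2 * fact (2 * n + 1))"
    by (subst binomial_fact) (simp_all add: numeral_3_eq_3)
  show ?thesis
    unfolding u c1 c2 gbinomial_minus_three_halves by (simp add: field_simps del: fact_Suc)
qed

lemma powr_minus_three_halves:
  fixes t :: real assumes "0 < t"
  shows "t powr (-3/2) = 1 / sqrt t ^ 3"
proof -
  have "sqrt t ^ 3 = (t powr (1/2)) ^ 3" using assms by (simp add: powr_half_sqrt)
  also have "\<dots> = t powr (3/2)" using assms by (simp add: powr_powr flip: powr_realpow)
  finally show ?thesis using assms by (simp add: powr_minus_divide)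
qed

lemma minus_two_square_power: "(- 2 * z\<^sup>2) ^ k = (-2) ^ k * (z::real) ^ (2 * k)"
  unfolding power_mult_distrib power_mult ..

lemma lower_series_sums:
  fixes z :: real assumes "2 * z\<^sup>2 < 1"
  shows "(\<lambda>m. lower_tree_number m * z ^ m / fact (m - 1)) sums (1 - sqrt (1 - 2 * z\<^sup>2))"
proof -
  let ?x = "- 2 * z\<^sup>2" and ?f = "\<lambda>m. lower_tree_number m * z ^ m / fact (m - 1)"
  have "(\<lambda>n. ((1/2) gchoose n) * ?x ^ n) sums sqrt (1 + ?x)"
    using assms by (intro sqrt_series) simp
  then have "(\<lambda>n. ((1/2) gchoose Suc n) * ?x ^ Suc n) sums (sqrt (1 + ?x) - 1)"
    by (subst sums_Suc_iff) simp
  then have "(\<lambda>n. - (((1/2) gchoose Suc n) * ?x ^ Suc n)) sums (1 - sqrt (1 - 2 * z\<^sup>2))"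
    using sums_minus by fastforce
  moreover have "- (((1/2) gchoose Suc n) * ?x ^ Suc n) = ?f (2 * n + 2)" for n
  proof -
    have "- (((1/2) gchoose Suc n) * ?x ^ Suc n) = - (((1/2) gchoose Suc n) * (-2) ^ Suc n) * z ^ (2 * n + 2)"
      unfolding minus_two_square_power by simp
    also have "\<dots> = ?f (2 * n + 2)" unfolding lower_tree_number_coeff[symmetric] by simp
    finally show ?thesis .
  qed
  ultimately have "(\<lambda>n. ?f (2 * n + 2)) sums (1 - sqrt (1 - 2 * z\<^sup>2))" by simp
  moreover have "?f m = 0" if "m \<notin> range (\<lambda>n. 2 * n + 2)" for m
  proof -
    have "\<not> (2 \<le> m \<and> even m)"
    proof
      assume "2 \<le> m \<and> even m"
      then have "m = 2 * ((m - 2) div 2) + 2" by auto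
      then show False using that by blast
    qed
    then have "lower_tree_number m = 0" unfolding lower_tree_number_def by (rule if_not_P)
    then show ?thesis by simp
  qed
  moreover have "strict_mono (\<lambda>n::nat. 2 * n + 2)" by (rule strict_monoI) simp
  ultimately show ?thesis using sums_mono_reindex[of "\<lambda>n. 2 * n + 2" ?f] by blast
qed

lemma upper_series_sums:
  fixes z :: real assumes "2 * z\<^sup>2 < 1"
  shows "(\<lambda>m. upper_tree_number m * z ^ m / fact m) sums (z ^ 3 / sqrt (1 - 2 * z\<^sup>2) ^ 3)"
proof -
  let ?x = "- 2 * z\<^sup>2" and ?f = "\<lambda>m. upper_tree_number m * z ^ m / fact m"
  have "(\<lambda>n. ((-3/2) gchoose n) * ?x ^ n) sums (1 + ?x) powr (-3/2)"
    using assms by (intro gen_binomial_real) simp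
  then have "(\<lambda>n. z ^ 3 * (((-3/2) gchoose n) * ?x ^ n)) sums (z ^ 3 * (1 + ?x) powr (-3/2))"
    by (rule sums_mult)
  moreover have "z ^ 3 * (1 + ?x) powr (-3/2) = z ^ 3 / sqrt (1 - 2 * z\<^sup>2) ^ 3"
    using powr_minus_three_halves[of "1 + ?x"] assms by simp
  ultimately have "(\<lambda>n. z ^ 3 * (((-3/2) gchoose n) * ?x ^ n)) sums (z ^ 3 / sqrt (1 - 2 * z\<^sup>2) ^ 3)"
    by simp
  moreover have "z ^ 3 * (((-3/2) gchoose n) * ?x ^ n) = ?f (2 * n + 3)" for n
  proof -
    have "z ^ 3 * (((-3/2) gchoose n) * ?x ^ n) = ((-3/2) gchoose n) * (-2) ^ n * z ^ (2 * n + 3)"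
      unfolding minus_two_square_power by (simp add: power_add)
    also have "\<dots> = ?f (2 * n + 3)" unfolding upper_tree_number_coeff[symmetric] by simp
    finally show ?thesis .
  qed
  ultimately have "(\<lambda>n. ?f (2 * n + 3)) sums (z ^ 3 / sqrt (1 - 2 * z\<^sup>2) ^ 3)" by simp
  moreover have "?f m = 0" if "m \<notin> range (\<lambda>n. 2 * n + 3)" for m
  proof -
    have "\<not> (3 \<le> m \<and> odd m)"
    proof
      assume "3 \<le> m \<and> odd m"
      then have "m = 2 * ((m - 3) div 2) + 3" by presburger
      then show False using that by blast
    qed
    then have "upper_tree_number m = 0" unfolding upper_tree_number_def by (rule if_not_P)
    then show ?thesis by simp
  qed
  moreover have "strict_mono (\<lambda>n::nat. 2 * n + 3)" by (rule strict_monoI) simp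
  ultimately show ?thesis using sums_mono_reindex[of "\<lambda>n. 2 * n + 3" ?f] by blast
qed

lemma Suc_mult_choose_div_fact:
  assumes "k \<le> m"
  shows "real (Suc m) * real (m choose k) / fact (Suc m) = 1 / (fact k * fact (m - k))"
  using assms by (simp add: binomial_fact)

lemma T1_term_eq_convolution:
  fixes z :: real
  shows "real (T1 n) * z ^ n / fact n =
    (\<Sum>i\<le>n. lower_tree_number i * z ^ i / fact (i - 1) * (upper_tree_number (n - i) * z ^ (n - i) / fact (n - i)))"
proof (cases n)
  case 0
  then show ?thesis using T1_eq_convolution[of 0] lower_tree_number_0 by simp
next
  case (Suc m)
  have "real (T1 n) = (\<Sum>k\<le>m. real (Suc m) * real (m choose k) *
      (lower_tree_number (Suc k) * upper_tree_number (m - k)))"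
    using T1_eq_convolution[of n] unfolding Suc by (simp add: sum_distrib_left mult.assoc)
  then have "real (T1 n) * z ^ n / fact n = (\<Sum>k\<le>m. real (Suc m) * real (m choose k) *
      (lower_tree_number (Suc k) * upper_tree_number (m - k)) * z ^ Suc m / fact (Suc m))"
    unfolding Suc by (simp add: sum_distrib_right sum_divide_distrib)
  also have "\<dots> = (\<Sum>k\<le>m. lower_tree_number (Suc k) * z ^ Suc k / fact k *
      (upper_tree_number (m - k) * z ^ (m - k) / fact (m - k)))"
  proof (rule sum.cong[OF refl])
    fix k assume "k \<in> {..m}"
    then have k: "k \<le> m" by simp
    have z: "z ^ Suc m = z ^ Suc k * z ^ (m - k)" using k by (simp flip: power_add)
    have "real (Suc m) * real (m choose k) * (lower_tree_number (Suc k) * upper_tree_number (m - k)) *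
        z ^ Suc m / fact (Suc m) = (real (Suc m) * real (m choose k) / fact (Suc m)) *
        (lower_tree_number (Suc k) * z ^ Suc k) * (upper_tree_number (m - k) * z ^ (m - k))"
      unfolding z by (simp add: mult_ac)
    also have "\<dots> = lower_tree_number (Suc k) * z ^ Suc k / fact k *
        (upper_tree_number (m - k) * z ^ (m - k) / fact (m - k))"
      unfolding Suc_mult_choose_div_fact[OF k] by simp
    finally show "real (Suc m) * real (m choose k) * (lower_tree_number (Suc k) * upper_tree_number (m - k)) *
        z ^ Suc m / fact (Suc m) = lower_tree_number (Suc k) * z ^ Suc k / fact k *
        (upper_tree_number (m - k) * z ^ (m - k) / fact (m - k))" .
  qed
  also have "\<dots> = (\<Sum>i\<le>n. lower_tree_number i * z ^ i / fact (i - 1) *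
      (upper_tree_number (n - i) * z ^ (n - i) / fact (n - i)))"
    unfolding Suc sum.atMost_Suc_shift by (simp add: lower_tree_number_0)
  finally show ?thesis .
qed

theorem T1_egf_sums:
  fixes z :: real assumes z: "2 * z\<^sup>2 < 1"
  shows "(\<lambda>n. real (T1 n) * z ^ n / fact n) sums
    ((1 - sqrt (1 - 2 * z\<^sup>2)) * (z ^ 3 / sqrt (1 - 2 * z\<^sup>2) ^ 3))"
proof -
  let ?a = "\<lambda>z m. lower_tree_number m * z ^ m / fact (m - 1)"
    and ?b = "\<lambda>z m. upper_tree_number m * z ^ m / fact m"
  have z': "2 * \<bar>z\<bar>\<^sup>2 < 1" using z by simp
  have norm_a: "norm (?a z m) = ?a \<bar>z\<bar> m" and norm_b: "norm (?b z m) = ?b \<bar>z\<bar> m" for m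
    using lower_tree_number_nonneg upper_tree_number_nonneg by (simp_all add: abs_mult power_abs)
  have "summable (\<lambda>m. norm (?a z m))"
    unfolding norm_a using lower_series_sums[OF z'] by (rule sums_summable)
  moreover have "summable (\<lambda>m. norm (?b z m))"
    unfolding norm_b using upper_series_sums[OF z'] by (rule sums_summable)
  ultimately have "(\<lambda>n. \<Sum>i\<le>n. ?a z i * ?b z (n - i)) sums ((\<Sum>m. ?a z m) * (\<Sum>m. ?b z m))"
    by (rule Cauchy_product_sums)
  then show ?thesis
    unfolding T1_term_eq_convolution sums_unique[OF lower_series_sums[OF z], symmetric]
      sums_unique[OF upper_series_sums[OF z], symmetric] .
qed

theorem proposition6:
  fixes z :: real
  assumes "\<bar>z\<bar> < 1 / sqrt 2"
  shows "(\<lambda>n. real (T1 n) * z ^ n / fact n) sums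
           (z ^ 3 * (1 - sqrt (1 - 2 * z\<^sup>2)) / sqrt (1 - 2 * z\<^sup>2) ^ 3)
       \<and> z ^ 3 * (1 - sqrt (1 - 2 * z\<^sup>2)) / sqrt (1 - 2 * z\<^sup>2) ^ 3
         = z * (a1_tilde (z\<^sup>2) - b1_tilde (z\<^sup>2) * sqrt (1 - 2 * z\<^sup>2)) / sqrt (1 - 2 * z\<^sup>2) ^ 3"
proof
  have "\<bar>z\<bar>\<^sup>2 < (1 / sqrt 2)\<^sup>2"
    using assms by (intro power_strict_mono) auto
  then have "2 * z\<^sup>2 < 1" by (simp add: power_divide)
  then show "(\<lambda>n. real (T1 n) * z ^ n / fact n) sums
      (z ^ 3 * (1 - sqrt (1 - 2 * z\<^sup>2)) / sqrt (1 - 2 * z\<^sup>2) ^ 3)"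
    using T1_egf_sums by (simp add: field_simps)
  show "z ^ 3 * (1 - sqrt (1 - 2 * z\<^sup>2)) / sqrt (1 - 2 * z\<^sup>2) ^ 3
      = z * (a1_tilde (z\<^sup>2) - b1_tilde (z\<^sup>2) * sqrt (1 - 2 * z\<^sup>2)) / sqrt (1 - 2 * z\<^sup>2) ^ 3"
    unfolding a1_tilde_def b1_tilde_def by (simp add: algebra_simps power3_eq_cube power2_eq_square)
qed

end
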